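(* Let $u_0,u_1\in C_0^\infty(\mathbb R^3)$ be radial with support in $\{|x|\le M\}$, $M>0$, and let $F_0$ and $\tau_0$ be as defined below. Then the problem $$2\partial_{q\tau}V+V\partial_q^2V-\partial_qV\,\partial_q^2V=0,\quad (q,\tau)\in\mathbb R\times[0,\infty),\qquad V(q,0)=F_0(q),\qquad \operatorname{supp}V\subseteq\{q\le M\},$$ has a $C^\infty$ solution $V(q,\tau)$ for $0\le\tau<\tau_0$.
   Context: Write $u_0(r),u_1(r)$ for the radial profiles, extended evenly to $[-M,M]$ (they are smooth functions of $r^2$) and by zero beyond. Define $F_0(s)=\tfrac12\big(s\,u_0(s)+\int_s^\infty \rho\,u_1(\rho)\,d\rho\big)$ for $s\in\mathbb R$. For $s\in[-M,M]$ with $F_0'(s)\ne0$ and $\frac{F_0''(s)}{F_0''(s)-F_0'(s)}>0$ set $\tau(s)=\frac{2}{F_0'(s)}\ln\frac{F_0''(s)}{F_0''(s)-F_0'(s)}$. Let $A=\{s\in(-M,M): F_0'(s)\ne0,\ \frac{F_0''(s)}{F_0''(s)-F_0'(s)}>0,\ \tau(s)>0\}$, $B=\{s\in(-M,M):F_0'(s)=0,\ F_0''(s)>0\}$, and $\tau_0=\min\{\min_{s\in A}\tau(s),\ \min_{s\in B}2/F_0''(s)\}$. *)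

theory Defs
  imports "HOL-Analysis.Analysis"
begin

fun C_k :: "nat \<Rightarrow> ('a::euclidean_space \<Rightarrow> real) \<Rightarrow> bool" where
  "C_k 0 f \<longleftrightarrow> continuous_on UNIV f"
| "C_k (Suc k) f \<longleftrightarrow> f differentiable_on UNIV \<and>
     (\<forall>b\<in>Basis. C_k k (\<lambda>x. frechet_derivative f (at x) b))"

definition smooth :: "('a::euclidean_space \<Rightarrow> real) \<Rightarrow> bool" where
  "smooth f \<longleftrightarrow> (\<forall>k. C_k k f)"

definition radial :: "('a::real_normed_vector \<Rightarrow> real) \<Rightarrow> bool" where
  "radial f \<longleftrightarrow> (\<forall>x y. norm x = norm y \<longrightarrow> f x = f y)"

text \<open>Radial profile, extended evenly to the real line.\<close>
definition profile :: "(real^3 \<Rightarrow> real) \<Rightarrow> real \<Rightarrow> real" where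
  "profile u s = u (\<bar>s\<bar> *\<^sub>R axis 1 1)"

definition F0 :: "(real^3 \<Rightarrow> real) \<Rightarrow> (real^3 \<Rightarrow> real) \<Rightarrow> real \<Rightarrow> real" where
  "F0 u0 u1 s = (1/2) * (s * profile u0 s + integral {s..} (\<lambda>\<rho>. \<rho> * profile u1 \<rho>))"

definition tau_fun :: "(real \<Rightarrow> real) \<Rightarrow> real \<Rightarrow> real" where
  "tau_fun F s = 2 / deriv F s * ln (deriv (deriv F) s / (deriv (deriv F) s - deriv F s))"

definition setA :: "(real \<Rightarrow> real) \<Rightarrow> real \<Rightarrow> real set" where
  "setA F M = {s. -M < s \<and> s < M \<and> deriv F s \<noteq> 0 \<and>
       deriv (deriv F) s / (deriv (deriv F) s - deriv F s) > 0 \<and> tau_fun F s > 0}"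

definition setB :: "(real \<Rightarrow> real) \<Rightarrow> real \<Rightarrow> real set" where
  "setB F M = {s. -M < s \<and> s < M \<and> deriv F s = 0 \<and> deriv (deriv F) s > 0}"

text \<open>tau_0 as an extended real: the infimum (= minimum when attained) of the
  candidate times; +infinity if there are none.\<close>
definition tau0 :: "(real \<Rightarrow> real) \<Rightarrow> real \<Rightarrow> ereal" where
  "tau0 F M = Inf ((\<lambda>s. ereal (tau_fun F s)) ` setA F M \<union>
                   (\<lambda>s. ereal (2 / deriv (deriv F) s)) ` setB F M)"

definition strip :: "ereal \<Rightarrow> (real \<times> real) set" where
  "strip T = {(q,t). 0 \<le> t \<and> ereal t < T}"

text \<open>D i j is the partial derivative d_q^i d_tau^j of V = D 0 0; smoothness on the
  half strip R x [0,T) (one-sided tau-derivatives at tau = 0): all partial derivatives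
  exist and are continuous on the strip.\<close>
definition smooth_derivs :: "ereal \<Rightarrow> (nat \<Rightarrow> nat \<Rightarrow> real \<Rightarrow> real \<Rightarrow> real) \<Rightarrow> bool" where
  "smooth_derivs T D \<longleftrightarrow>
     (\<forall>i j. continuous_on (strip T) (\<lambda>(q,t). D i j q t)) \<and>
     (\<forall>i j q t. (q,t) \<in> strip T \<longrightarrow>
        ((\<lambda>x. D i j x t) has_real_derivative D (Suc i) j q t) (at q) \<and>
        ((\<lambda>y. D i j q y) has_real_derivative D i (Suc j) q t)
            (at t within {y. 0 \<le> y \<and> ereal y < T}))"

end

theory Submission
  imports Defs
begin

text \<open>The equation says that the slope \<open>V\<^sub>q\<close> is transported along the characteristics
  \<open>dq/d\<tau> = (V - V\<^sub>q) / 2\<close>. In Lagrangian coordinates \<open>q(s, \<tau>)\<close> the slope is therefore \<open>F0' s\<close>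
  for all times, the Jacobian \<open>J = \<partial>\<^sub>s q\<close> solves a linear ODE in \<open>\<tau>\<close> with an explicit solution, and
  \<open>q\<close> and \<open>V\<close> along the particle paths are obtained by integrating in \<open>s\<close> from the right of the
  support, where nothing moves. As long as \<open>J > 0\<close>, which is exactly the case for \<open>\<tau> < \<tau>\<^sub>0\<close>, the
  map \<open>s \<mapsto> q(s, \<tau>)\<close> is invertible and transporting back gives the solution. Smoothness up to
  \<open>\<tau> = 0\<close> is tracked by a coinductive notion on the half strip, which is closed under the
  operations of the construction and under the change to Eulerian coordinates; Schwarz's theorem
  turns it into the table of partial derivatives.\<close>

section \<open>Calculus on the half strip\<close>

abbreviation time_dom :: "ereal \<Rightarrow> real set" where
  "time_dom T \<equiv> {y. 0 \<le> y \<and> ereal y < T}"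

lemma mem_strip_iff [simp]: "(x, t) \<in> strip T \<longleftrightarrow> t \<in> time_dom T"
  by (simp add: strip_def)

lemma time_domI: assumes "0 \<le> s" "s \<le> t'" "ereal t' < T" shows "s \<in> time_dom T"
proof -
  have "ereal s \<le> ereal t'" using assms(2) by simp
  thus ?thesis using assms(1,3) order_le_less_trans[of "ereal s" "ereal t'" T] by simp
qed

lemma time_dom_between: "t \<in> time_dom T \<Longrightarrow> t \<le> s \<Longrightarrow> s \<le> t' \<Longrightarrow> t' \<in> time_dom T \<Longrightarrow> s \<in> time_dom T"
  using time_domI by auto

lemma convex_time_dom: "convex (time_dom T)"
  by (rule is_interval_convex) (unfold is_interval_1, use time_dom_between in blast)

lemma exists_time_above:
  assumes "t \<in> time_dom T" obtains t' where "t < t'" "ereal t' < T"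
proof -
  obtain t' where "ereal t < ereal t'" "ereal t' < T" using assms ereal_dense2[of "ereal t" T] by auto
  thus ?thesis using that by simp
qed

lemma at_within_time_dom_nontrivial: assumes "t \<in> time_dom T" shows "at t within time_dom T \<noteq> bot"
proof -
  obtain t' where t': "t < t'" "ereal t' < T" using exists_time_above[OF assms] .
  have "{t..t'} \<subseteq> time_dom T" using assms t' time_domI[of _ t' T] by auto
  moreover have "t islimpt {t..t'}" using t' by simp
  ultimately show ?thesis by (simp add: islimpt_subset trivial_limit_within)
qed

lemma has_real_derivative_interior_time:
  assumes "(f has_real_derivative D) (at y within time_dom T)" "0 < y" "ereal y < T"
  shows "(f has_real_derivative D) (at y)"
proof -
  obtain y' where y': "y < y'" "ereal y' < T" using exists_time_above[of y T] assms by auto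
  have "{0<..<y'} \<subseteq> time_dom T" using y' time_domI[of _ y' T] by auto
  hence "(f has_real_derivative D) (at y within {0<..<y'})"
    using has_field_derivative_subset[OF assms(1)] by blast
  thus ?thesis using assms(2) y' at_within_open[of y "{0<..<y'}"] by simp
qed

lemma MVT_time_dom:
  assumes d: "\<And>y. y \<in> {a..b} \<Longrightarrow> (f has_real_derivative f' y) (at y within time_dom T)"
    and ab: "a < b" "a \<in> time_dom T" "b \<in> time_dom T"
  obtains z where "a < z" "z < b" "f b - f a = (b - a) * f' z"
proof -
  have sub: "{a..b} \<subseteq> time_dom T" using time_dom_between[of a T _ b] ab by auto
  have "continuous_on {a..b} f"
    by (rule DERIV_continuous_on[of _ _ f'], rule has_field_derivative_subset[OF d sub])
  moreover have inner: "(f has_real_derivative f' z) (at z)" if "a < z" "z < b" for z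
  proof (rule has_real_derivative_interior_time[where T=T])
    show "(f has_real_derivative f' z) (at z within time_dom T)" using d that by auto
    show "0 < z" using that ab by auto
    have "z \<in> {a..b}" using that by simp
    hence "z \<in> time_dom T" using sub by blast
    thus "ereal z < T" by simp
  qed
  ultimately obtain l z where lz: "a < z" "z < b" "DERIV f z :> l" "f b - f a = (b - a) * l"
    using MVT[OF ab(1)] by (metis real_differentiable_def)
  hence "l = f' z" using inner DERIV_unique by blast
  thus ?thesis using lz that by blast
qed

lemma MVT_any_order:
  assumes "\<And>y. ((f::real \<Rightarrow> real) has_real_derivative f' y) (at y)"
  obtains z where "\<bar>z - a\<bar> \<le> \<bar>b - a\<bar>" "f b - f a = (b - a) * f' z"
proof (cases a b rule: linorder_cases)
  case less
  from MVT2[OF less, of f f'] assms obtain z where "a < z" "z < b" "f b - f a = (b - a) * f' z" by blast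
  thus ?thesis using that[of z] by auto
next
  case equal thus ?thesis using that by auto
next
  case greater
  from MVT2[OF greater, of f f'] assms obtain z where "b < z" "z < a" "f a - f b = (a - b) * f' z" by blast
  thus ?thesis using that[of z] by (auto simp: algebra_simps)
qed

lemma dist_Pair_le_abs_sum: "dist (a::real, b::real) (c, d) \<le> \<bar>a - c\<bar> + \<bar>b - d\<bar>"
  unfolding dist_Pair_Pair dist_real_def using sqrt_sum_squares_le_sum_abs by simp

lemma continuous_on_strip_slice:
  assumes "continuous_on (strip T) (\<lambda>(x, t). H x t)" "t \<in> time_dom T"
  shows "continuous_on UNIV (\<lambda>x. H x t)"
proof -
  have "continuous_on UNIV (\<lambda>x. (\<lambda>(x, t). H x t) (x, t))"
    by (rule continuous_on_compose2[OF assms(1)]) (use assms(2) in \<open>auto intro!: continuous_intros\<close>)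
  thus ?thesis by simp
qed

definition has_partial_x :: "ereal \<Rightarrow> (real \<Rightarrow> real \<Rightarrow> real) \<Rightarrow> (real \<Rightarrow> real \<Rightarrow> real) \<Rightarrow> bool" where
  "has_partial_x T H G \<longleftrightarrow>
     (\<forall>x t. t \<in> time_dom T \<longrightarrow> ((\<lambda>x. H x t) has_real_derivative G x t) (at x))"

definition has_partial_t :: "ereal \<Rightarrow> (real \<Rightarrow> real \<Rightarrow> real) \<Rightarrow> (real \<Rightarrow> real \<Rightarrow> real) \<Rightarrow> bool" where
  "has_partial_t T H G \<longleftrightarrow>
     (\<forall>x t. t \<in> time_dom T \<longrightarrow> ((\<lambda>y. H x y) has_real_derivative G x t) (at t within time_dom T))"

lemma has_partial_x_unique:
  "has_partial_x T H G1 \<Longrightarrow> has_partial_x T H G2 \<Longrightarrow> t \<in> time_dom T \<Longrightarrow> G1 x t = G2 x t"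
  unfolding has_partial_x_def using DERIV_unique by blast

lemma has_partial_x_cong:
  assumes "has_partial_x T A G" "\<And>x t. t \<in> time_dom T \<Longrightarrow> A x t = B x t"
    "\<And>x t. t \<in> time_dom T \<Longrightarrow> G x t = G' x t"
  shows "has_partial_x T B G'"
  unfolding has_partial_x_def
proof (intro allI impI)
  fix x t assume t: "t \<in> time_dom T"
  have "(\<lambda>x. A x t) = (\<lambda>x. B x t)" using assms(2) t by auto
  thus "((\<lambda>x. B x t) has_real_derivative G' x t) (at x)"
    using assms(1) assms(3)[OF t] t unfolding has_partial_x_def by metis
qed

lemma has_partial_t_cong:
  assumes "has_partial_t T A G" "\<And>x t. t \<in> time_dom T \<Longrightarrow> A x t = B x t"
    "\<And>x t. t \<in> time_dom T \<Longrightarrow> G x t = G' x t"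
  shows "has_partial_t T B G'"
  unfolding has_partial_t_def
proof (intro allI impI)
  fix x t assume t: "t \<in> time_dom T"
  have "((\<lambda>y. A x y) has_real_derivative G x t) (at t within time_dom T)"
    using assms(1) t unfolding has_partial_t_def by auto
  hence "((\<lambda>y. B x y) has_real_derivative G x t) (at t within time_dom T)"
    by (rule has_field_derivative_transform_within[where d=1]) (use t assms(2) in auto)
  thus "((\<lambda>y. B x y) has_real_derivative G' x t) (at t within time_dom T)" using assms(3)[OF t] by simp
qed

lemma has_partial_t_const_zero:
  assumes "has_partial_t T h Ht" "t \<in> time_dom T" "\<And>\<tau>. \<tau> \<in> time_dom T \<Longrightarrow> h y \<tau> = 0"
  shows "Ht y t = 0"
proof -
  have "((\<lambda>\<tau>. h y \<tau>) has_real_derivative Ht y t) (at t within time_dom T)"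
    using assms unfolding has_partial_t_def by blast
  hence "((\<lambda>\<tau>. 0) has_real_derivative Ht y t) (at t within time_dom T)"
    by (rule has_field_derivative_transform_within[where d=1]) (use assms in auto)
  thus ?thesis using has_field_derivative_unique[OF _ DERIV_const] at_within_time_dom_nontrivial[OF assms(2)]
    by blast
qed

text \<open>Both iterated difference quotients of \<open>H\<close> over a square of side \<open>h\<close> are mean values of
  a mixed partial derivative; continuity then forces the two mixed partials to agree.\<close>

lemma second_difference_partial_x_t:
  assumes hx: "has_partial_x T H Hx" and hxt: "has_partial_t T Hx Hxt"
    and h: "h > 0" and t: "t \<in> time_dom T" "t + h \<in> time_dom T"
  obtains \<xi> \<eta> where "x < \<xi>" "\<xi> < x + h" "t < \<eta>" "\<eta> < t + h"
    "H (x+h) (t+h) - H (x+h) t - H x (t+h) + H x t = h * (h * Hxt \<xi> \<eta>)"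
proof -
  have "\<exists>\<xi>. x < \<xi> \<and> \<xi> < x + h \<and>
      (H (x+h) (t+h) - H (x+h) t) - (H x (t+h) - H x t) = (x + h - x) * (Hx \<xi> (t+h) - Hx \<xi> t)"
    by (rule MVT2[where f="\<lambda>\<xi>. H \<xi> (t+h) - H \<xi> t"])
       (use h hx t in \<open>auto simp: has_partial_x_def intro!: derivative_eq_intros\<close>)
  then obtain \<xi> where \<xi>: "x < \<xi>" "\<xi> < x + h"
    "(H (x+h) (t+h) - H (x+h) t) - (H x (t+h) - H x t) = (x + h - x) * (Hx \<xi> (t+h) - Hx \<xi> t)"
    by blast
  obtain \<eta> where \<eta>: "t < \<eta>" "\<eta> < t + h" "Hx \<xi> (t+h) - Hx \<xi> t = (t + h - t) * Hxt \<xi> \<eta>"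
    by (rule MVT_time_dom[of t "t + h" "\<lambda>y. Hx \<xi> y" "\<lambda>y. Hxt \<xi> y" T])
       (use hxt t h time_dom_between[OF t(1) _ _ t(2)] in \<open>auto simp: has_partial_t_def\<close>)
  have "H (x+h) (t+h) - H (x+h) t - H x (t+h) + H x t = h * (h * Hxt \<xi> \<eta>)"
    using \<xi>(3) \<eta>(3) by (simp add: algebra_simps)
  thus ?thesis using that \<xi>(1,2) \<eta>(1,2) by blast
qed

lemma second_difference_partial_t_x:
  assumes ht: "has_partial_t T H Ht" and htx: "has_partial_x T Ht Htx"
    and h: "h > 0" and t: "t \<in> time_dom T" "t + h \<in> time_dom T"
  obtains \<xi> \<eta> where "x < \<xi>" "\<xi> < x + h" "t < \<eta>" "\<eta> < t + h"
    "H (x+h) (t+h) - H (x+h) t - H x (t+h) + H x t = h * (h * Htx \<xi> \<eta>)"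
proof -
  have between: "y \<in> time_dom T" if "t \<le> y" "y \<le> t + h" for y
    using time_dom_between[OF t(1) that t(2)] .
  obtain \<eta> where \<eta>: "t < \<eta>" "\<eta> < t + h"
    "(H (x+h) (t+h) - H x (t+h)) - (H (x+h) t - H x t) = (t + h - t) * (Ht (x+h) \<eta> - Ht x \<eta>)"
    by (rule MVT_time_dom[of t "t + h" "\<lambda>y. H (x+h) y - H x y" "\<lambda>y. Ht (x+h) y - Ht x y" T])
       (use ht t h between in \<open>auto simp: has_partial_t_def intro!: derivative_eq_intros\<close>)
  have "\<exists>\<xi>. x < \<xi> \<and> \<xi> < x + h \<and> Ht (x+h) \<eta> - Ht x \<eta> = (x + h - x) * Htx \<xi> \<eta>"
    by (rule MVT2[where f="\<lambda>\<xi>. Ht \<xi> \<eta>"]) (use h htx between \<eta> in \<open>auto simp: has_partial_x_def\<close>)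
  then obtain \<xi> where \<xi>: "x < \<xi>" "\<xi> < x + h" "Ht (x+h) \<eta> - Ht x \<eta> = (x + h - x) * Htx \<xi> \<eta>"
    by blast
  have "H (x+h) (t+h) - H (x+h) t - H x (t+h) + H x t = h * (h * Htx \<xi> \<eta>)"
    using \<xi>(3) \<eta>(3) by (simp add: algebra_simps)
  thus ?thesis using that \<xi>(1,2) \<eta>(1,2) by blast
qed

lemma mixed_partials_eq:
  fixes H Hx Ht Hxt Htx :: "real \<Rightarrow> real \<Rightarrow> real"
  assumes hx: "has_partial_x T H Hx" and ht: "has_partial_t T H Ht"
    and hxt: "has_partial_t T Hx Hxt" and htx: "has_partial_x T Ht Htx"
    and c1: "continuous_on (strip T) (\<lambda>(x, t). Hxt x t)"
    and c2: "continuous_on (strip T) (\<lambda>(x, t). Htx x t)"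
    and t: "t \<in> time_dom T"
  shows "Hxt x t = Htx x t"
proof (rule ccontr)
  assume ne: "Hxt x t \<noteq> Htx x t"
  define e where "e = \<bar>Hxt x t - Htx x t\<bar>"
  have e: "e > 0" using ne by (simp add: e_def)
  have xt: "(x, t) \<in> strip T" using t by simp
  obtain d1 where d1: "d1 > 0" "\<And>p. p \<in> strip T \<Longrightarrow> dist p (x, t) < d1 \<Longrightarrow>
      dist ((\<lambda>(x, t). Hxt x t) p) (Hxt x t) < e/2"
    using c1 xt e unfolding continuous_on_iff by (metis (no_types, lifting) case_prod_conv half_gt_zero)
  obtain d2 where d2: "d2 > 0" "\<And>p. p \<in> strip T \<Longrightarrow> dist p (x, t) < d2 \<Longrightarrow>
      dist ((\<lambda>(x, t). Htx x t) p) (Htx x t) < e/2"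
    using c2 xt e unfolding continuous_on_iff by (metis (no_types, lifting) case_prod_conv half_gt_zero)
  obtain t' where t': "t < t'" "ereal t' < T" using exists_time_above[OF t] .
  define h where "h = min (min d1 d2) (t' - t) / 4"
  have "min (min d1 d2) (t' - t) \<le> d1" "min (min d1 d2) (t' - t) \<le> d2" "min (min d1 d2) (t' - t) \<le> t' - t"
    "min (min d1 d2) (t' - t) > 0" using d1 d2 t' by auto
  hence h: "h > 0" "2*h < d1" "2*h < d2" "t + h < t'" unfolding h_def by linarith+
  have th: "t + h \<in> time_dom T" using time_domI[of "t + h" t' T] t t' h by auto
  have close: "\<bar>F \<xi> \<eta> - F x t\<bar> < e/2"
    if "x < \<xi>" "\<xi> < x + h" "t < \<eta>" "\<eta> < t + h" "2*h < d"
      and d: "\<And>p. p \<in> strip T \<Longrightarrow> dist p (x, t) < d \<Longrightarrow> dist ((\<lambda>(x, t). F x t) p) (F x t) < e/2"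
    for F :: "real \<Rightarrow> real \<Rightarrow> real" and \<xi> \<eta> d
  proof -
    have "\<eta> \<in> time_dom T" using time_dom_between[OF t _ _ th] that by auto
    moreover have "dist (\<xi>, \<eta>) (x, t) < d"
      using dist_Pair_le_abs_sum[of \<xi> \<eta> x t] that by linarith
    ultimately show ?thesis using d[of "(\<xi>, \<eta>)"] by (simp add: dist_real_def)
  qed
  obtain \<xi>1 \<eta>1 where p1: "x < \<xi>1" "\<xi>1 < x + h" "t < \<eta>1" "\<eta>1 < t + h"
    and eq1: "H (x+h) (t+h) - H (x+h) t - H x (t+h) + H x t = h * (h * Hxt \<xi>1 \<eta>1)"
    using second_difference_partial_x_t[OF hx hxt h(1) t th] by blast
  obtain \<xi>2 \<eta>2 where p2: "x < \<xi>2" "\<xi>2 < x + h" "t < \<eta>2" "\<eta>2 < t + h"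
    and eq2: "H (x+h) (t+h) - H (x+h) t - H x (t+h) + H x t = h * (h * Htx \<xi>2 \<eta>2)"
    using second_difference_partial_t_x[OF ht htx h(1) t th] by blast
  have "Hxt \<xi>1 \<eta>1 = Htx \<xi>2 \<eta>2" using eq1 eq2 h(1) by simp
  moreover have "\<bar>Hxt \<xi>1 \<eta>1 - Hxt x t\<bar> < e/2" using close[OF p1 h(2) d1(2)] .
  moreover have "\<bar>Htx \<xi>2 \<eta>2 - Htx x t\<bar> < e/2" using close[OF p2 h(3) d2(2)] .
  ultimately show False unfolding e_def by (auto simp: abs_if split: if_splits)
qed

section \<open>Smoothness on the half strip\<close>

text \<open>Defined coinductively, so that the iterates of \<open>partial_x\<close> and \<open>partial_t\<close> directly form
  the derivative table of \<open>smooth_derivs\<close>.\<close>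

definition strip_C1_in :: "ereal \<Rightarrow> ((real \<Rightarrow> real \<Rightarrow> real) \<Rightarrow> bool) \<Rightarrow> (real \<Rightarrow> real \<Rightarrow> real) \<Rightarrow> bool" where
  "strip_C1_in T P H \<longleftrightarrow> continuous_on (strip T) (\<lambda>(x, t). H x t) \<and>
     (\<exists>Hx Ht. has_partial_x T H Hx \<and> has_partial_t T H Ht \<and> P Hx \<and> P Ht)"

coinductive strip_smooth :: "ereal \<Rightarrow> (real \<Rightarrow> real \<Rightarrow> real) \<Rightarrow> bool" for T where
  strip_smoothI: "continuous_on (strip T) (\<lambda>(x, t). H x t) \<Longrightarrow> has_partial_x T H Hx \<Longrightarrow>
    has_partial_t T H Ht \<Longrightarrow> strip_smooth T Hx \<Longrightarrow> strip_smooth T Ht \<Longrightarrow> strip_smooth T H"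

lemma strip_smooth_coinduct:
  assumes "X H" "\<And>H. X H \<Longrightarrow> strip_C1_in T (\<lambda>G. X G \<or> strip_smooth T G) H"
  shows "strip_smooth T H"
  using assms(1)
proof (coinduction arbitrary: H rule: strip_smooth.coinduct)
  case (strip_smooth H)
  thus ?case using assms(2) unfolding strip_C1_in_def by blast
qed

lemma strip_smooth_imp_C1: "strip_smooth T H \<Longrightarrow> strip_C1_in T (strip_smooth T) H"
  unfolding strip_C1_in_def by (subst (asm) strip_smooth.simps) blast

definition partial_x :: "ereal \<Rightarrow> (real \<Rightarrow> real \<Rightarrow> real) \<Rightarrow> real \<Rightarrow> real \<Rightarrow> real" where
  "partial_x T H = (SOME G. has_partial_x T H G \<and> strip_smooth T G)"

definition partial_t :: "ereal \<Rightarrow> (real \<Rightarrow> real \<Rightarrow> real) \<Rightarrow> real \<Rightarrow> real \<Rightarrow> real" where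
  "partial_t T H = (SOME G. has_partial_t T H G \<and> strip_smooth T G)"

lemma strip_smooth_continuous: "strip_smooth T H \<Longrightarrow> continuous_on (strip T) (\<lambda>(x, t). H x t)"
  by (subst (asm) strip_smooth.simps) blast

lemma strip_smooth_partial_x:
  assumes "strip_smooth T H" shows "has_partial_x T H (partial_x T H)" "strip_smooth T (partial_x T H)"
proof -
  have "\<exists>G. has_partial_x T H G \<and> strip_smooth T G" using assms by (subst (asm) strip_smooth.simps) blast
  hence "has_partial_x T H (partial_x T H) \<and> strip_smooth T (partial_x T H)"
    unfolding partial_x_def by (rule someI_ex)
  thus "has_partial_x T H (partial_x T H)" "strip_smooth T (partial_x T H)" by auto
qed

lemma strip_smooth_partial_t:
  assumes "strip_smooth T H" shows "has_partial_t T H (partial_t T H)" "strip_smooth T (partial_t T H)"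
proof -
  have "\<exists>G. has_partial_t T H G \<and> strip_smooth T G" using assms by (subst (asm) strip_smooth.simps) blast
  hence "has_partial_t T H (partial_t T H) \<and> strip_smooth T (partial_t T H)"
    unfolding partial_t_def by (rule someI_ex)
  thus "has_partial_t T H (partial_t T H)" "strip_smooth T (partial_t T H)" by auto
qed

lemma strip_smooth_cong:
  assumes "strip_smooth T A" "\<And>x t. t \<in> time_dom T \<Longrightarrow> A x t = B x t" shows "strip_smooth T B"
proof -
  obtain Hx Ht where H: "continuous_on (strip T) (\<lambda>(x, t). A x t)" "has_partial_x T A Hx"
    "has_partial_t T A Ht" "strip_smooth T Hx" "strip_smooth T Ht"
    using assms(1) by (subst (asm) strip_smooth.simps) blast
  have "continuous_on (strip T) (\<lambda>(x, t). B x t)"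
    using H(1) by (rule continuous_on_eq) (use assms(2) in auto)
  moreover have "has_partial_x T B Hx" by (rule has_partial_x_cong[OF H(2) assms(2)]) auto
  moreover have "has_partial_t T B Ht" by (rule has_partial_t_cong[OF H(3) assms(2)]) auto
  ultimately show ?thesis using H(4,5) by (rule strip_smoothI)
qed

lemma partial_x_cong:
  assumes "strip_smooth T A" "strip_smooth T B" "\<And>x t. t \<in> time_dom T \<Longrightarrow> A x t = B x t"
    "t \<in> time_dom T"
  shows "partial_x T A x t = partial_x T B x t"
proof -
  have "has_partial_x T B (partial_x T A)"
    by (rule has_partial_x_cong[OF strip_smooth_partial_x(1)[OF assms(1)] assms(3)]) auto
  thus ?thesis using has_partial_x_unique strip_smooth_partial_x(1)[OF assms(2)] assms(4) by blast
qed

lemma partial_t_partial_x_commute: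
  assumes "strip_smooth T H" "t \<in> time_dom T"
  shows "partial_t T (partial_x T H) x t = partial_x T (partial_t T H) x t"
  by (rule mixed_partials_eq[of T H "partial_x T H" "partial_t T H"])
     (use assms strip_smooth_partial_x strip_smooth_partial_t strip_smooth_continuous in auto)

lemma strip_smooth_partial_x_iterate: "strip_smooth T H \<Longrightarrow> strip_smooth T ((partial_x T ^^ i) H)"
  by (induction i) (auto intro: strip_smooth_partial_x)

lemma strip_smooth_partial_t_iterate: "strip_smooth T H \<Longrightarrow> strip_smooth T ((partial_t T ^^ i) H)"
  by (induction i) (auto intro: strip_smooth_partial_t)

lemma partial_t_partial_x_iterate_commute:
  "strip_smooth T H \<Longrightarrow> t \<in> time_dom T \<Longrightarrow>
     partial_t T ((partial_x T ^^ i) H) x t = (partial_x T ^^ i) (partial_t T H) x t"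
proof (induction i arbitrary: x t)
  case 0 thus ?case by simp
next
  case (Suc i)
  have "partial_t T ((partial_x T ^^ Suc i) H) x t = partial_x T (partial_t T ((partial_x T ^^ i) H)) x t"
    using partial_t_partial_x_commute Suc.prems strip_smooth_partial_x_iterate by simp
  also have "\<dots> = partial_x T ((partial_x T ^^ i) (partial_t T H)) x t"
    by (rule partial_x_cong)
       (use Suc strip_smooth_partial_x_iterate strip_smooth_partial_t strip_smooth_partial_t_iterate in auto)
  finally show ?case by simp
qed

lemma smooth_derivs_partial_iterates:
  assumes "strip_smooth T H"
  shows "smooth_derivs T (\<lambda>i j. (partial_x T ^^ i) ((partial_t T ^^ j) H))"
  unfolding smooth_derivs_def
proof (intro conjI allI impI)
  fix i j
  show "continuous_on (strip T) (\<lambda>(q, t). ((partial_x T ^^ i) ((partial_t T ^^ j) H)) q t)"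
    using strip_smooth_continuous strip_smooth_partial_x_iterate strip_smooth_partial_t_iterate assms
    by blast
next
  fix i j q t assume "(q, t) \<in> strip T"
  hence t: "t \<in> time_dom T" by simp
  let ?Hj = "(partial_t T ^^ j) H"
  have Hj: "strip_smooth T ?Hj" using strip_smooth_partial_t_iterate assms by blast
  show "((\<lambda>x. ((partial_x T ^^ i) ?Hj) x t) has_real_derivative ((partial_x T ^^ Suc i) ?Hj) q t) (at q)"
    using strip_smooth_partial_x(1)[OF strip_smooth_partial_x_iterate[OF Hj, of i]] t
    unfolding has_partial_x_def by simp
  have "((\<lambda>y. ((partial_x T ^^ i) ?Hj) q y) has_real_derivative partial_t T ((partial_x T ^^ i) ?Hj) q t)
      (at t within time_dom T)"
    using strip_smooth_partial_t(1)[OF strip_smooth_partial_x_iterate[OF Hj, of i]] t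
    unfolding has_partial_t_def by simp
  thus "((\<lambda>y. ((partial_x T ^^ i) ?Hj) q y) has_real_derivative
      ((partial_x T ^^ i) ((partial_t T ^^ Suc j) H)) q t) (at t within time_dom T)"
    using partial_t_partial_x_iterate_commute[OF Hj t] by simp
qed

lemma strip_smooth_const: "strip_smooth T (\<lambda>x t. c)"
proof (rule strip_smooth_coinduct[where X="\<lambda>H. \<exists>c. H = (\<lambda>x t. c)"])
  fix H :: "real \<Rightarrow> real \<Rightarrow> real" assume "\<exists>c. H = (\<lambda>x t. c)"
  then obtain c where c: "H = (\<lambda>x t. c)" by blast
  have "has_partial_x T H (\<lambda>x t. 0)" "has_partial_t T H (\<lambda>x t. 0)"
    unfolding has_partial_x_def has_partial_t_def c by auto
  thus "strip_C1_in T (\<lambda>G. (\<exists>c. G = (\<lambda>x t. c)) \<or> strip_smooth T G) H"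
    unfolding strip_C1_in_def c by (auto intro: continuous_on_const)
qed blast

lemma strip_smooth_fst: "strip_smooth T (\<lambda>x t. x)"
proof (rule strip_smoothI[where Hx="\<lambda>x t. 1" and Ht="\<lambda>x t. 0"])
  show "continuous_on (strip T) (\<lambda>(x, t). x)" by (auto intro!: continuous_intros simp: split_beta)
  show "has_partial_x T (\<lambda>x t. x) (\<lambda>x t. 1)" unfolding has_partial_x_def by auto
  show "has_partial_t T (\<lambda>x t. x) (\<lambda>x t. 0)" unfolding has_partial_t_def by auto
qed (auto intro: strip_smooth_const)

lemma strip_smooth_snd: "strip_smooth T (\<lambda>x t. t)"
proof (rule strip_smoothI[where Hx="\<lambda>x t. 0" and Ht="\<lambda>x t. 1"])
  show "continuous_on (strip T) (\<lambda>(x, t). t)" by (auto intro!: continuous_intros simp: split_beta)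
  show "has_partial_x T (\<lambda>x t. t) (\<lambda>x t. 0)" unfolding has_partial_x_def by auto
  show "has_partial_t T (\<lambda>x t. t) (\<lambda>x t. 1)" unfolding has_partial_t_def by (auto intro!: derivative_eq_intros)
qed (auto intro: strip_smooth_const)

lemma continuous_on_strip_if_partials:
  assumes hx: "has_partial_x T H Hx" and ht: "has_partial_t T H Ht"
    and c: "continuous_on (strip T) (\<lambda>(x, t). Hx x t)"
  shows "continuous_on (strip T) (\<lambda>(x, t). H x t)"
  unfolding continuous_on_iff
proof (intro ballI allI impI)
  fix p e assume p: "p \<in> strip T" and e: "(0::real) < e"
  obtain x0 t0 where p0: "p = (x0, t0)" by (cases p)
  have t0: "t0 \<in> time_dom T" using p p0 by simp
  obtain d1 where d1: "d1 > 0" "\<And>q. q \<in> strip T \<Longrightarrow> dist q p < d1 \<Longrightarrow>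
      dist ((\<lambda>(x, t). Hx x t) q) ((\<lambda>(x, t). Hx x t) p) < 1"
    using c p unfolding continuous_on_iff by (meson zero_less_one)
  define B where "B = \<bar>Hx x0 t0\<bar> + 1"
  have B: "B > 0" by (simp add: B_def add_pos_nonneg)
  have "continuous (at t0 within time_dom T) (\<lambda>y. H x0 y)"
    using ht t0 unfolding has_partial_t_def by (blast intro: DERIV_continuous)
  then obtain d2 where d2: "d2 > 0"
    "\<And>y. y \<in> time_dom T \<Longrightarrow> dist y t0 < d2 \<Longrightarrow> dist (H x0 y) (H x0 t0) < e/2"
    using e unfolding continuous_within_eps_delta by (meson half_gt_zero)
  define d where "d = min (min (d1/2) d2) (e / (2*B))"
  have d: "d > 0" using d1 d2 e B by (simp add: d_def)
  show "\<exists>d>0. \<forall>q\<in>strip T. dist q p < d \<longrightarrow> dist ((\<lambda>(x, t). H x t) q) ((\<lambda>(x, t). H x t) p) < e"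
  proof (intro exI[of _ d] conjI ballI impI d)
    fix q assume q: "q \<in> strip T" "dist q p < d"
    obtain x t where qq: "q = (x, t)" by (cases q)
    have t: "t \<in> time_dom T" using q qq by simp
    have dx: "\<bar>x - x0\<bar> < d" using dist_fst_le[of q p] q(2) qq p0 by (simp add: dist_real_def)
    have dt: "\<bar>t - t0\<bar> < d" using dist_snd_le[of q p] q(2) qq p0 by (simp add: dist_real_def)
    have "((\<lambda>x. H x t) has_real_derivative Hx y t) (at y)" for y
      using hx t unfolding has_partial_x_def by blast
    then obtain z where z: "\<bar>z - x0\<bar> \<le> \<bar>x - x0\<bar>" "H x t - H x0 t = (x - x0) * Hx z t"
      by (rule MVT_any_order)
    have "dist (z, t) p < d1"
      using dist_Pair_le_abs_sum[of z t x0 t0] z dx dt unfolding d_def p0 by linarith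
    hence "\<bar>Hx z t - Hx x0 t0\<bar> < 1" using d1(2)[of "(z, t)"] t p0 by (simp add: dist_real_def)
    hence "\<bar>Hx z t\<bar> \<le> B" unfolding B_def by linarith
    hence "\<bar>x - x0\<bar> * \<bar>Hx z t\<bar> \<le> d * B" using dx d by (intro mult_mono) auto
    hence "\<bar>H x t - H x0 t\<bar> \<le> d * B" using z(2) by (simp add: abs_mult)
    also have "\<dots> \<le> (e / (2*B)) * B" using B unfolding d_def by (intro mult_right_mono) auto
    also have "\<dots> = e/2" using B by simp
    finally have "\<bar>H x t - H x0 t\<bar> \<le> e/2" .
    moreover have "\<bar>H x0 t - H x0 t0\<bar> < e/2" using d2(2)[OF t] dt unfolding d_def by (simp add: dist_real_def)
    ultimately have "\<bar>H x t - H x0 t0\<bar> < e" by linarith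
    thus "dist ((\<lambda>(x, t). H x t) q) ((\<lambda>(x, t). H x t) p) < e"
      using qq p0 by (simp add: dist_real_def)
  qed
qed

lemma has_real_derivative_integral_to_bound:
  assumes c: "continuous_on UNIV g" and z: "\<And>y. K \<le> y \<Longrightarrow> g y = 0"
  shows "((\<lambda>x. integral {x..K} g) has_real_derivative - g x0) (at x0)"
proof -
  define B where "B = max K (x0 + 1)"
  have eq: "integral {x..K} g = integral {x..B} g" for x
  proof (cases "x \<le> K")
    case True
    have "integral {x..K} g + integral {K..B} g = integral {x..B} g"
      by (rule Henstock_Kurzweil_Integration.integral_combine)
         (use True in \<open>auto simp: B_def intro!: integrable_continuous_real continuous_on_subset[OF c]\<close>)
    moreover have "integral {K..B} g = integral {K..B} (\<lambda>_. 0)" by (rule integral_cong) (use z in auto)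
    ultimately show ?thesis by simp
  next
    case False
    have "integral {x..B} g = integral {x..B} (\<lambda>_. 0)" by (rule integral_cong) (use z False in auto)
    thus ?thesis using False by simp
  qed
  have "((\<lambda>x. integral {x..B} g) has_real_derivative - g x0) (at x0 within {x0 - 1..B})"
    by (rule integral_has_real_derivative') (auto simp: B_def intro: continuous_on_subset[OF c])
  hence "((\<lambda>x. integral {x..B} g) has_real_derivative - g x0) (at x0)"
    using at_within_Icc_at[of "x0 - 1" x0 B] by (simp add: B_def)
  thus ?thesis unfolding eq .
qed

lemma has_partial_t_integral:
  assumes ht: "has_partial_t T h Ht" and c: "continuous_on (strip T) (\<lambda>(x, t). Ht x t)"
    and ch: "continuous_on (strip T) (\<lambda>(x, t). h x t)"
  shows "has_partial_t T (\<lambda>x t. integral {x..K} (\<lambda>y. h y t)) (\<lambda>x t. integral {x..K} (\<lambda>y. Ht y t))"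
  unfolding has_partial_t_def
proof (intro allI impI)
  fix x t assume t: "t \<in> time_dom T"
  have "continuous_on (time_dom T \<times> cbox x K) (\<lambda>p. (\<lambda>(x, t). Ht x t) (snd p, fst p))"
    by (rule continuous_on_compose2[OF c]) (auto intro!: continuous_intros)
  hence "((\<lambda>\<tau>. integral (cbox x K) (\<lambda>y. h y \<tau>)) has_real_derivative integral (cbox x K) (\<lambda>y. Ht y t))
      (at t within time_dom T)"
    by (intro leibniz_rule_field_derivative[where fx="\<lambda>\<tau> y. Ht y \<tau>"] integrable_continuous
          continuous_on_subset[OF continuous_on_strip_slice[OF ch]])
       (use ht t convex_time_dom in \<open>auto simp: has_partial_t_def split_beta\<close>)
  thus "((\<lambda>\<tau>. integral {x..K} (\<lambda>y. h y \<tau>)) has_real_derivative integral {x..K} (\<lambda>y. Ht y t))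
      (at t within time_dom T)"
    by simp
qed

coinductive real_smooth_on :: "real set \<Rightarrow> (real \<Rightarrow> real) \<Rightarrow> bool" for U where
  real_smooth_onI: "(\<And>x. x \<in> U \<Longrightarrow> (\<phi> has_real_derivative \<phi>' x) (at x)) \<Longrightarrow> real_smooth_on U \<phi>' \<Longrightarrow>
    real_smooth_on U \<phi>"

lemma real_smooth_on_coinduct:
  assumes "X \<phi>"
    and "\<And>\<phi>. X \<phi> \<Longrightarrow> \<exists>\<phi>'. (\<forall>x\<in>U. (\<phi> has_real_derivative \<phi>' x) (at x)) \<and> (X \<phi>' \<or> real_smooth_on U \<phi>')"
  shows "real_smooth_on U \<phi>"
  using assms(1)
proof (coinduction arbitrary: \<phi> rule: real_smooth_on.coinduct)
  case (real_smooth_on \<phi>)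
  thus ?case using assms(2) by blast
qed

definition real_deriv_on :: "real set \<Rightarrow> (real \<Rightarrow> real) \<Rightarrow> real \<Rightarrow> real" where
  "real_deriv_on U \<phi> = (SOME \<phi>'. (\<forall>x\<in>U. (\<phi> has_real_derivative \<phi>' x) (at x)) \<and> real_smooth_on U \<phi>')"

lemma real_smooth_on_deriv:
  assumes "real_smooth_on U \<phi>"
  shows "\<And>x. x \<in> U \<Longrightarrow> (\<phi> has_real_derivative real_deriv_on U \<phi> x) (at x)"
    "real_smooth_on U (real_deriv_on U \<phi>)"
proof -
  have "\<exists>\<phi>'. (\<forall>x\<in>U. (\<phi> has_real_derivative \<phi>' x) (at x)) \<and> real_smooth_on U \<phi>'"
    using assms by (subst (asm) real_smooth_on.simps) blast
  hence "(\<forall>x\<in>U. (\<phi> has_real_derivative real_deriv_on U \<phi> x) (at x)) \<and> real_smooth_on U (real_deriv_on U \<phi>)"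
    unfolding real_deriv_on_def by (rule someI_ex)
  thus "\<And>x. x \<in> U \<Longrightarrow> (\<phi> has_real_derivative real_deriv_on U \<phi> x) (at x)"
    "real_smooth_on U (real_deriv_on U \<phi>)" by auto
qed

lemma real_smooth_on_exp: "real_smooth_on UNIV exp"
  by (rule real_smooth_on_coinduct[where X="\<lambda>\<phi>. \<phi> = exp"]) (auto intro: DERIV_exp)

lemma real_smooth_on_inverse: "real_smooth_on {0<..} inverse"
proof -
  have "\<exists>c n. \<phi> = (\<lambda>x. c * inverse x ^ n) \<Longrightarrow> real_smooth_on {0<..} \<phi>" for \<phi> :: "real \<Rightarrow> real"
  proof (rule real_smooth_on_coinduct[where X="\<lambda>\<phi>. \<exists>c n. \<phi> = (\<lambda>x. c * inverse x ^ n)"])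
    fix \<phi> :: "real \<Rightarrow> real" assume "\<exists>c n. \<phi> = (\<lambda>x. c * inverse x ^ n)"
    then obtain c n where c: "\<phi> = (\<lambda>x. c * inverse x ^ n)" by blast
    have "\<forall>x\<in>{0<..}. (\<phi> has_real_derivative (- c * real n) * inverse x ^ Suc n) (at x)"
    proof
      fix x :: real assume "x \<in> {0<..}"
      hence d: "((\<lambda>x. c * inverse x ^ n) has_real_derivative
          c * (real n * inverse x ^ (n - 1) * (- (inverse x * inverse x)))) (at x)"
        by (auto intro!: derivative_eq_intros)
      have eq: "c * (real n * inverse x ^ (n - 1) * (- (inverse x * inverse x))) =
          (- c * real n) * inverse x ^ Suc n"
        by (cases n) (simp_all add: power_Suc)
      show "(\<phi> has_real_derivative (- c * real n) * inverse x ^ Suc n) (at x)"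
        unfolding c using d[unfolded eq] .
    qed
    thus "\<exists>\<phi>'. (\<forall>x\<in>{0<..}. (\<phi> has_real_derivative \<phi>' x) (at x)) \<and>
        ((\<exists>c n. \<phi>' = (\<lambda>x. c * inverse x ^ n)) \<or> real_smooth_on {0<..} \<phi>')"
      by (intro exI[of _ "\<lambda>x. (- c * real n) * inverse x ^ Suc n"]) blast
  qed
  moreover have "inverse = (\<lambda>x::real. 1 * inverse x ^ 1)" by auto
  ultimately show ?thesis by metis
qed

text \<open>Closure of \<open>strip_smooth\<close> under products cannot be shown by coinduction directly, since
  the partial derivatives of \<open>F * G\<close> are sums of products; hence this inductive closure.\<close>

inductive strip_smooth_expr :: "ereal \<Rightarrow> (real \<Rightarrow> real \<Rightarrow> real) \<Rightarrow> bool" for T where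
  expr_smooth: "strip_smooth T H \<Longrightarrow> strip_smooth_expr T H"
| expr_add: "strip_smooth_expr T F \<Longrightarrow> strip_smooth_expr T G \<Longrightarrow> strip_smooth_expr T (\<lambda>x t. F x t + G x t)"
| expr_mult: "strip_smooth_expr T F \<Longrightarrow> strip_smooth_expr T G \<Longrightarrow> strip_smooth_expr T (\<lambda>x t. F x t * G x t)"
| expr_compose: "real_smooth_on U \<phi> \<Longrightarrow> strip_smooth T H \<Longrightarrow> (\<And>x t. t \<in> time_dom T \<Longrightarrow> H x t \<in> U) \<Longrightarrow>
    strip_smooth_expr T (\<lambda>x t. \<phi> (H x t))"
| expr_integral: "strip_smooth T h \<Longrightarrow> (\<And>x t. t \<in> time_dom T \<Longrightarrow> K \<le> x \<Longrightarrow> h x t = 0) \<Longrightarrow>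
    strip_smooth_expr T (\<lambda>x t. integral {x..K} (\<lambda>y. h y t))"

lemma strip_C1_in_mono:
  "strip_C1_in T P H \<Longrightarrow> (\<And>G. P G \<Longrightarrow> Q G) \<Longrightarrow> strip_C1_in T Q H"
  unfolding strip_C1_in_def by blast

lemma strip_C1_in_add:
  assumes F: "strip_C1_in T (strip_smooth_expr T) F" and G: "strip_C1_in T (strip_smooth_expr T) G"
  shows "strip_C1_in T (strip_smooth_expr T) (\<lambda>x t. F x t + G x t)"
proof -
  obtain Fx Ft Gx Gt where d: "has_partial_x T F Fx" "has_partial_t T F Ft"
    "has_partial_x T G Gx" "has_partial_t T G Gt"
    and P: "strip_smooth_expr T Fx" "strip_smooth_expr T Ft" "strip_smooth_expr T Gx" "strip_smooth_expr T Gt"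
    using F G unfolding strip_C1_in_def by blast
  have "continuous_on (strip T) (\<lambda>(x, t). F x t + G x t)"
    using F G continuous_on_add[of "strip T" "\<lambda>(x, t). F x t" "\<lambda>(x, t). G x t"]
    unfolding strip_C1_in_def by (simp add: split_beta)
  moreover have "has_partial_x T (\<lambda>x t. F x t + G x t) (\<lambda>x t. Fx x t + Gx x t)"
    using d unfolding has_partial_x_def by (auto intro: DERIV_add)
  moreover have "has_partial_t T (\<lambda>x t. F x t + G x t) (\<lambda>x t. Ft x t + Gt x t)"
    using d unfolding has_partial_t_def by (auto intro: DERIV_add)
  ultimately show ?thesis
    using expr_add[OF P(1,3)] expr_add[OF P(2,4)] unfolding strip_C1_in_def by blast
qed

lemma strip_C1_in_mult:
  assumes F: "strip_C1_in T (strip_smooth_expr T) F" "strip_smooth_expr T F"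
    and G: "strip_C1_in T (strip_smooth_expr T) G" "strip_smooth_expr T G"
  shows "strip_C1_in T (strip_smooth_expr T) (\<lambda>x t. F x t * G x t)"
proof -
  obtain Fx Ft Gx Gt where d: "has_partial_x T F Fx" "has_partial_t T F Ft"
    "has_partial_x T G Gx" "has_partial_t T G Gt"
    and P: "strip_smooth_expr T Fx" "strip_smooth_expr T Ft" "strip_smooth_expr T Gx" "strip_smooth_expr T Gt"
    using F(1) G(1) unfolding strip_C1_in_def by blast
  have "continuous_on (strip T) (\<lambda>(x, t). F x t * G x t)"
    using F G continuous_on_mult[of "strip T" "\<lambda>(x, t). F x t" "\<lambda>(x, t). G x t"]
    unfolding strip_C1_in_def by (simp add: split_beta)
  moreover have "has_partial_x T (\<lambda>x t. F x t * G x t) (\<lambda>x t. Fx x t * G x t + F x t * Gx x t)"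
    using d unfolding has_partial_x_def by (auto intro!: derivative_eq_intros)
  moreover have "has_partial_t T (\<lambda>x t. F x t * G x t) (\<lambda>x t. Ft x t * G x t + F x t * Gt x t)"
    using d unfolding has_partial_t_def by (auto intro!: derivative_eq_intros)
  moreover have "strip_smooth_expr T (\<lambda>x t. Fx x t * G x t + F x t * Gx x t)"
    "strip_smooth_expr T (\<lambda>x t. Ft x t * G x t + F x t * Gt x t)"
    using expr_add[OF expr_mult[OF P(1) G(2)] expr_mult[OF F(2) P(3)]]
      expr_add[OF expr_mult[OF P(2) G(2)] expr_mult[OF F(2) P(4)]] by simp_all
  ultimately show ?thesis unfolding strip_C1_in_def by blast
qed

lemma strip_C1_in_compose:
  assumes \<phi>: "real_smooth_on U \<phi>" and H: "strip_smooth T H"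
    and HU: "\<And>x t. t \<in> time_dom T \<Longrightarrow> H x t \<in> U"
  shows "strip_C1_in T (strip_smooth_expr T) (\<lambda>x t. \<phi> (H x t))"
proof -
  obtain Hx Ht where d: "has_partial_x T H Hx" "has_partial_t T H Ht"
    and s: "strip_smooth T Hx" "strip_smooth T Ht"
    using strip_smooth_imp_C1[OF H] unfolding strip_C1_in_def by blast
  note \<phi>' = real_smooth_on_deriv(1)[OF \<phi>]
  have "continuous_on U \<phi>"
    using \<phi>' by (intro continuous_at_imp_continuous_on) (blast intro: DERIV_isCont)
  hence "continuous_on (strip T) (\<lambda>p. \<phi> ((\<lambda>(x, t). H x t) p))"
    by (rule continuous_on_compose2[OF _ strip_smooth_continuous[OF H]]) (use HU in auto)
  moreover have "has_partial_x T (\<lambda>x t. \<phi> (H x t)) (\<lambda>x t. real_deriv_on U \<phi> (H x t) * Hx x t)"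
    unfolding has_partial_x_def
  proof (intro allI impI)
    fix x t assume t: "t \<in> time_dom T"
    show "((\<lambda>x. \<phi> (H x t)) has_real_derivative real_deriv_on U \<phi> (H x t) * Hx x t) (at x)"
      by (rule DERIV_chain2[OF \<phi>']) (use t HU d(1) in \<open>auto simp: has_partial_x_def\<close>)
  qed
  moreover have "has_partial_t T (\<lambda>x t. \<phi> (H x t)) (\<lambda>x t. real_deriv_on U \<phi> (H x t) * Ht x t)"
    unfolding has_partial_t_def
  proof (intro allI impI)
    fix x t assume t: "t \<in> time_dom T"
    show "((\<lambda>y. \<phi> (H x y)) has_real_derivative real_deriv_on U \<phi> (H x t) * Ht x t) (at t within time_dom T)"
      by (rule DERIV_chain2[OF \<phi>']) (use t HU d(2) in \<open>auto simp: has_partial_t_def\<close>)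
  qed
  moreover have "strip_smooth_expr T (\<lambda>x t. real_deriv_on U \<phi> (H x t) * G x t)"
    if "strip_smooth T G" for G
    by (intro expr_mult[OF expr_compose[OF real_smooth_on_deriv(2)[OF \<phi>] H HU]] expr_smooth that)
  ultimately show ?thesis using s unfolding strip_C1_in_def by (simp add: split_beta) blast
qed

lemma strip_C1_in_integral:
  assumes h: "strip_smooth T h" and vanish: "\<And>x t. t \<in> time_dom T \<Longrightarrow> K \<le> x \<Longrightarrow> h x t = 0"
  shows "strip_C1_in T (strip_smooth_expr T) (\<lambda>x t. integral {x..K} (\<lambda>y. h y t))"
proof -
  obtain hx ht where d: "has_partial_x T h hx" "has_partial_t T h ht"
    and s: "strip_smooth T hx" "strip_smooth T ht"
    using strip_smooth_imp_C1[OF h] unfolding strip_C1_in_def by blast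
  note ch = strip_smooth_continuous[OF h]
  have dx: "has_partial_x T (\<lambda>x t. integral {x..K} (\<lambda>y. h y t)) (\<lambda>x t. (-1) * h x t)"
    unfolding has_partial_x_def
    using has_real_derivative_integral_to_bound[OF continuous_on_strip_slice[OF ch]] vanish by simp
  have dt: "has_partial_t T (\<lambda>x t. integral {x..K} (\<lambda>y. h y t)) (\<lambda>x t. integral {x..K} (\<lambda>y. ht y t))"
    by (rule has_partial_t_integral[OF d(2) strip_smooth_continuous[OF s(2)] ch])
  have "continuous_on (strip T) (\<lambda>(x, t). (-1) * h x t)"
    using continuous_on_mult[OF continuous_on_const ch, of "-1"] by (simp add: split_beta)
  hence "continuous_on (strip T) (\<lambda>(x, t). integral {x..K} (\<lambda>y. h y t))"
    by (rule continuous_on_strip_if_partials[OF dx dt])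
  moreover have "strip_smooth_expr T (\<lambda>x t. integral {x..K} (\<lambda>y. ht y t))"
    by (rule expr_integral[OF s(2)]) (use has_partial_t_const_zero[OF d(2)] vanish in blast)
  moreover have "strip_smooth_expr T (\<lambda>x t. (-1) * h x t)"
    by (rule expr_mult[OF expr_smooth[OF strip_smooth_const] expr_smooth[OF h]])
  ultimately show ?thesis using dx dt unfolding strip_C1_in_def by blast
qed

lemma strip_smooth_expr_C1: "strip_smooth_expr T H \<Longrightarrow> strip_C1_in T (strip_smooth_expr T) H"
proof (induction rule: strip_smooth_expr.induct)
  case (expr_smooth H)
  show ?case using strip_C1_in_mono[OF strip_smooth_imp_C1[OF expr_smooth]] strip_smooth_expr.expr_smooth .
qed (auto intro: strip_C1_in_add strip_C1_in_mult strip_C1_in_compose strip_C1_in_integral)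

lemma strip_smooth_expr_imp_strip_smooth: "strip_smooth_expr T H \<Longrightarrow> strip_smooth T H"
  by (erule strip_smooth_coinduct, erule strip_C1_in_mono[OF strip_smooth_expr_C1]) blast

lemma strip_smooth_if_expr: "strip_smooth_expr T F \<Longrightarrow> (\<And>x t. t \<in> time_dom T \<Longrightarrow> F x t = G x t) \<Longrightarrow> strip_smooth T G"
  using strip_smooth_expr_imp_strip_smooth strip_smooth_cong by blast

lemma mean_value_tendsto_partial_x:
  assumes hx: "has_partial_x T H Hx" and c: "continuous_on (strip T) (\<lambda>(x, t). Hx x t)"
    and t0: "t0 \<in> time_dom T" and \<alpha>: "(\<alpha> \<longlongrightarrow> \<alpha> t0) (at t0 within time_dom T)"
  obtains \<xi> where "\<And>t. t \<in> time_dom T \<Longrightarrow> H (\<alpha> t) t - H (\<alpha> t0) t = (\<alpha> t - \<alpha> t0) * Hx (\<xi> t) t"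
    "((\<lambda>t. Hx (\<xi> t) t) \<longlongrightarrow> Hx (\<alpha> t0) t0) (at t0 within time_dom T)"
proof -
  have "\<exists>z. t \<in> time_dom T \<longrightarrow>
      \<bar>z - \<alpha> t0\<bar> \<le> \<bar>\<alpha> t - \<alpha> t0\<bar> \<and> H (\<alpha> t) t - H (\<alpha> t0) t = (\<alpha> t - \<alpha> t0) * Hx z t" for t
  proof (cases "t \<in> time_dom T")
    case True
    hence "((\<lambda>x. H x t) has_real_derivative Hx y t) (at y)" for y
      using hx unfolding has_partial_x_def by blast
    then obtain z where "\<bar>z - \<alpha> t0\<bar> \<le> \<bar>\<alpha> t - \<alpha> t0\<bar>" "H (\<alpha> t) t - H (\<alpha> t0) t = (\<alpha> t - \<alpha> t0) * Hx z t"
      by (rule MVT_any_order)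
    thus ?thesis by blast
  qed auto
  then obtain \<xi> where \<xi>: "\<And>t. t \<in> time_dom T \<Longrightarrow>
      \<bar>\<xi> t - \<alpha> t0\<bar> \<le> \<bar>\<alpha> t - \<alpha> t0\<bar> \<and> H (\<alpha> t) t - H (\<alpha> t0) t = (\<alpha> t - \<alpha> t0) * Hx (\<xi> t) t"
    by metis
  have ev: "eventually (\<lambda>t. t \<in> time_dom T) (at t0 within time_dom T)" by (simp add: eventually_at_filter)
  have "((\<lambda>t. \<bar>\<alpha> t - \<alpha> t0\<bar>) \<longlongrightarrow> 0) (at t0 within time_dom T)"
    using \<alpha> tendsto_rabs_zero LIM_zero by blast
  hence "((\<lambda>t. \<xi> t - \<alpha> t0) \<longlongrightarrow> 0) (at t0 within time_dom T)"
    by (rule Lim_null_comparison[rotated]) (use ev \<xi> in \<open>auto elim: eventually_mono\<close>)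
  hence "((\<lambda>t. (\<xi> t, t)) \<longlongrightarrow> (\<alpha> t0, t0)) (at t0 within time_dom T)"
    by (intro tendsto_Pair tendsto_ident_at) (simp add: LIM_zero_iff)
  hence "((\<lambda>t. (\<lambda>(x, t). Hx x t) (\<xi> t, t)) \<longlongrightarrow> (\<lambda>(x, t). Hx x t) (\<alpha> t0, t0)) (at t0 within time_dom T)"
    by (rule continuous_on_tendsto_compose[OF c]) (use t0 ev in \<open>auto elim: eventually_mono\<close>)
  hence "((\<lambda>t. Hx (\<xi> t) t) \<longlongrightarrow> Hx (\<alpha> t0) t0) (at t0 within time_dom T)" by simp
  thus ?thesis using that[of \<xi>] \<xi> by blast
qed

lemma has_real_derivative_along_curve:
  assumes hx: "has_partial_x T H Hx" and ht: "has_partial_t T H Ht"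
    and c: "continuous_on (strip T) (\<lambda>(x, t). Hx x t)"
    and t0: "t0 \<in> time_dom T" and \<alpha>: "(\<alpha> has_real_derivative \<alpha>') (at t0 within time_dom T)"
  shows "((\<lambda>t. H (\<alpha> t) t) has_real_derivative Hx (\<alpha> t0) t0 * \<alpha>' + Ht (\<alpha> t0) t0) (at t0 within time_dom T)"
proof -
  have "(\<alpha> \<longlongrightarrow> \<alpha> t0) (at t0 within time_dom T)"
    using DERIV_continuous[OF \<alpha>] by (simp add: continuous_within)
  then obtain \<xi> where \<xi>: "\<And>t. t \<in> time_dom T \<Longrightarrow> H (\<alpha> t) t - H (\<alpha> t0) t = (\<alpha> t - \<alpha> t0) * Hx (\<xi> t) t"
    "((\<lambda>t. Hx (\<xi> t) t) \<longlongrightarrow> Hx (\<alpha> t0) t0) (at t0 within time_dom T)"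
    using mean_value_tendsto_partial_x[OF hx c t0] by blast
  have q1: "((\<lambda>t. (\<alpha> t - \<alpha> t0) / (t - t0)) \<longlongrightarrow> \<alpha>') (at t0 within time_dom T)"
    using \<alpha> by (simp add: has_field_derivative_iff)
  have q2: "((\<lambda>t. (H (\<alpha> t0) t - H (\<alpha> t0) t0) / (t - t0)) \<longlongrightarrow> Ht (\<alpha> t0) t0) (at t0 within time_dom T)"
    using ht t0 unfolding has_partial_t_def has_field_derivative_iff by blast
  have "eventually (\<lambda>t. Hx (\<xi> t) t * ((\<alpha> t - \<alpha> t0) / (t - t0)) + (H (\<alpha> t0) t - H (\<alpha> t0) t0) / (t - t0)
      = (H (\<alpha> t) t - H (\<alpha> t0) t0) / (t - t0)) (at t0 within time_dom T)"
    unfolding eventually_at_filter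
  proof (intro always_eventually allI impI)
    fix t assume "t \<in> time_dom T"
    hence "(\<alpha> t - \<alpha> t0) * Hx (\<xi> t) t + (H (\<alpha> t0) t - H (\<alpha> t0) t0) = H (\<alpha> t) t - H (\<alpha> t0) t0"
      using \<xi>(1)[of t] by simp
    thus "Hx (\<xi> t) t * ((\<alpha> t - \<alpha> t0) / (t - t0)) + (H (\<alpha> t0) t - H (\<alpha> t0) t0) / (t - t0)
        = (H (\<alpha> t) t - H (\<alpha> t0) t0) / (t - t0)"
      by (simp add: add_divide_distrib[symmetric] mult.commute)
  qed
  moreover have "((\<lambda>t. Hx (\<xi> t) t * ((\<alpha> t - \<alpha> t0) / (t - t0)) + (H (\<alpha> t0) t - H (\<alpha> t0) t0) / (t - t0))
      \<longlongrightarrow> Hx (\<alpha> t0) t0 * \<alpha>' + Ht (\<alpha> t0) t0) (at t0 within time_dom T)"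
    by (intro tendsto_add tendsto_mult \<xi>(2) q1 q2)
  ultimately show ?thesis unfolding has_field_derivative_iff using tendsto_cong by force
qed

section \<open>Lagrangian coordinates\<close>

text \<open>\<open>q s t\<close> is the position at time \<open>t\<close> of the particle with label \<open>s\<close>.\<close>

locale lagrangian_map =
  fixes T :: ereal and q J qt :: "real \<Rightarrow> real \<Rightarrow> real"
  assumes q_smooth: "strip_smooth T q" and q_partial_x: "has_partial_x T q J"
    and q_partial_t: "has_partial_t T q qt"
    and J_smooth: "strip_smooth T J" and qt_smooth: "strip_smooth T qt"
    and J_pos: "\<And>s t. t \<in> time_dom T \<Longrightarrow> J s t > 0"
    and q_surj: "\<And>x t. t \<in> time_dom T \<Longrightarrow> \<exists>s. q s t = x"
begin

definition label :: "real \<Rightarrow> real \<Rightarrow> real" where "label x t = (THE s. q s t = x)"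

lemma q_strict_mono: assumes "t \<in> time_dom T" "a < b" shows "q a t < q b t"
proof -
  obtain z where "q b t - q a t = (b - a) * J z t"
    using MVT2[OF assms(2), of "\<lambda>s. q s t" "\<lambda>s. J s t"] q_partial_x assms(1)
    unfolding has_partial_x_def by blast
  moreover have "(b - a) * J z t > 0" using J_pos[OF assms(1)] assms(2) by simp
  ultimately show ?thesis by linarith
qed

lemma q_less_iff: "t \<in> time_dom T \<Longrightarrow> q a t < q b t \<longleftrightarrow> a < b"
  using q_strict_mono by (metis linorder_neqE_linordered_idom order_less_asym)

lemma q_label: assumes "t \<in> time_dom T" shows "q (label x t) t = x"
proof -
  have "\<exists>!s. q s t = x"
    using q_surj[OF assms] q_strict_mono[OF assms] by (metis linorder_neqE_linordered_idom order_less_irrefl)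
  thus ?thesis unfolding label_def by (rule theI')
qed

lemma label_eqI: "t \<in> time_dom T \<Longrightarrow> q s t = x \<Longrightarrow> label x t = s"
  using q_label q_less_iff by (metis linorder_neqE_linordered_idom order_less_irrefl)

lemma continuous_on_label: "continuous_on (strip T) (\<lambda>(x, t). label x t)"
  unfolding continuous_on_iff
proof (intro ballI allI impI)
  fix p e assume p: "p \<in> strip T" and e: "(0::real) < e"
  obtain x0 t0 where p0: "p = (x0, t0)" by (cases p)
  have t0: "t0 \<in> time_dom T" using p p0 by simp
  define s0 where "s0 = label x0 t0"
  have lo: "q (s0 - e) t0 < x0" and hi: "x0 < q (s0 + e) t0"
    using q_strict_mono[OF t0, of "s0 - e" s0] q_strict_mono[OF t0, of s0 "s0 + e"] q_label[OF t0] e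
    by (auto simp: s0_def)
  define m where "m = min (x0 - q (s0 - e) t0) (q (s0 + e) t0 - x0)"
  define \<eta> where "\<eta> = m / 4"
  have "m \<le> x0 - q (s0 - e) t0" "m \<le> q (s0 + e) t0 - x0" "m > 0" using lo hi by (auto simp: m_def)
  hence \<eta>: "\<eta> > 0" "q (s0 - e) t0 + \<eta> < x0 - \<eta>" "x0 + \<eta> < q (s0 + e) t0 - \<eta>"
    unfolding \<eta>_def by linarith+
  have "continuous_on (time_dom T) (\<lambda>t. q s t)" for s
    using q_partial_t unfolding has_partial_t_def continuous_on_eq_continuous_within
    by (blast intro: DERIV_continuous)
  hence "\<exists>d>0. \<forall>t\<in>time_dom T. dist t t0 < d \<longrightarrow> dist (q s t) (q s t0) < \<eta>" for s
    using t0 \<eta>(1) unfolding continuous_on_iff by blast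
  then obtain d1 d2 where d: "d1 > 0" "\<forall>t\<in>time_dom T. dist t t0 < d1 \<longrightarrow> dist (q (s0 - e) t) (q (s0 - e) t0) < \<eta>"
    "d2 > 0" "\<forall>t\<in>time_dom T. dist t t0 < d2 \<longrightarrow> dist (q (s0 + e) t) (q (s0 + e) t0) < \<eta>"
    by meson
  define d where "d = min (min d1 d2) \<eta>"
  show "\<exists>d>0. \<forall>r\<in>strip T. dist r p < d \<longrightarrow> dist ((\<lambda>(x, t). label x t) r) ((\<lambda>(x, t). label x t) p) < e"
  proof (intro exI[of _ d] conjI ballI impI)
    show "d > 0" using d \<eta> by (simp add: d_def)
    fix r assume r: "r \<in> strip T" "dist r p < d"
    obtain x t where rr: "r = (x, t)" by (cases r)
    have t: "t \<in> time_dom T" using r rr by simp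
    have dx: "\<bar>x - x0\<bar> < d" using dist_fst_le[of r p] r(2) rr p0 by (simp add: dist_real_def)
    have dt: "dist t t0 < d" using dist_snd_le[of r p] r(2) rr p0 by simp
    have "\<bar>q (s0 - e) t - q (s0 - e) t0\<bar> < \<eta>" "\<bar>q (s0 + e) t - q (s0 + e) t0\<bar> < \<eta>"
      using d(2) d(4) t dt unfolding d_def by (auto simp: dist_real_def)
    hence "q (s0 - e) t < q (label x t) t" "q (label x t) t < q (s0 + e) t"
      using dx \<eta> q_label[OF t] unfolding d_def by auto
    hence "s0 - e < label x t" "label x t < s0 + e" using q_less_iff[OF t] by blast+
    thus "dist ((\<lambda>(x, t). label x t) r) ((\<lambda>(x, t). label x t) p) < e"
      using rr p0 s0_def by (simp add: dist_real_def abs_less_iff)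
  qed
qed

lemma has_real_derivative_label_x:
  assumes "t \<in> time_dom T"
  shows "((\<lambda>x. label x t) has_real_derivative inverse (J (label x t) t)) (at x)"
proof (rule DERIV_inverse_function[where f="\<lambda>s. q s t" and a="x - 1" and b="x + 1"])
  show "((\<lambda>s. q s t) has_real_derivative J (label x t) t) (at (label x t))"
    using q_partial_x assms unfolding has_partial_x_def by blast
  show "J (label x t) t \<noteq> 0" using J_pos[OF assms] by (metis less_irrefl)
  show "isCont (\<lambda>x. label x t) x"
    using continuous_on_strip_slice[OF continuous_on_label assms] by (simp add: continuous_on_eq_continuous_at)
qed (use q_label[OF assms] in auto)

lemma has_real_derivative_label_t:
  assumes t0: "t0 \<in> time_dom T"
  shows "((\<lambda>t. label x t) has_real_derivative - qt (label x t0) t0 * inverse (J (label x t0) t0))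
    (at t0 within time_dom T)"
proof -
  define \<alpha> where "\<alpha> = (\<lambda>t. label x t)"
  have "continuous_on (time_dom T) (\<lambda>t. (\<lambda>(x, t). label x t) (x, t))"
    by (rule continuous_on_compose2[OF continuous_on_label]) (auto intro!: continuous_intros)
  hence "(\<alpha> \<longlongrightarrow> \<alpha> t0) (at t0 within time_dom T)" using t0 by (auto simp: continuous_on_def \<alpha>_def)
  then obtain \<xi> where \<xi>: "\<And>t. t \<in> time_dom T \<Longrightarrow> q (\<alpha> t) t - q (\<alpha> t0) t = (\<alpha> t - \<alpha> t0) * J (\<xi> t) t"
    "((\<lambda>t. J (\<xi> t) t) \<longlongrightarrow> J (\<alpha> t0) t0) (at t0 within time_dom T)"
    using mean_value_tendsto_partial_x[OF q_partial_x strip_smooth_continuous[OF J_smooth] t0] by blast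
  have q2: "((\<lambda>t. (q (\<alpha> t0) t - q (\<alpha> t0) t0) / (t - t0)) \<longlongrightarrow> qt (\<alpha> t0) t0) (at t0 within time_dom T)"
    using q_partial_t t0 unfolding has_partial_t_def has_field_derivative_iff by blast
  have "((\<lambda>t. - ((q (\<alpha> t0) t - q (\<alpha> t0) t0) / (t - t0)) / J (\<xi> t) t)
      \<longlongrightarrow> - qt (\<alpha> t0) t0 / J (\<alpha> t0) t0) (at t0 within time_dom T)"
    using J_pos[OF t0, of "\<alpha> t0"] by (intro tendsto_divide tendsto_minus q2 \<xi>(2)) auto
  moreover have "eventually (\<lambda>t. - ((q (\<alpha> t0) t - q (\<alpha> t0) t0) / (t - t0)) / J (\<xi> t) t
      = (\<alpha> t - \<alpha> t0) / (t - t0)) (at t0 within time_dom T)"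
    unfolding eventually_at_filter
  proof (intro always_eventually allI impI)
    fix t assume t: "t \<noteq> t0" "t \<in> time_dom T"
    have "q (\<alpha> t) t = x" "q (\<alpha> t0) t0 = x" using q_label t t0 unfolding \<alpha>_def by auto
    hence "(\<alpha> t - \<alpha> t0) * J (\<xi> t) t = - (q (\<alpha> t0) t - q (\<alpha> t0) t0)" using \<xi>(1)[OF t(2)] by simp
    hence e: "\<alpha> t - \<alpha> t0 = - (q (\<alpha> t0) t - q (\<alpha> t0) t0) / J (\<xi> t) t"
      using J_pos[OF t(2), of "\<xi> t"] by (simp add: eq_divide_eq)
    show "- ((q (\<alpha> t0) t - q (\<alpha> t0) t0) / (t - t0)) / J (\<xi> t) t = (\<alpha> t - \<alpha> t0) / (t - t0)"
      unfolding e by (simp add: mult.commute minus_divide_left)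
  qed
  ultimately have "(\<alpha> has_real_derivative - qt (\<alpha> t0) t0 / J (\<alpha> t0) t0) (at t0 within time_dom T)"
    unfolding has_field_derivative_iff using tendsto_cong by force
  thus ?thesis unfolding \<alpha>_def by (simp add: divide_inverse)
qed

lemma strip_smooth_compose_label:
  assumes "strip_smooth T H" shows "strip_smooth T (\<lambda>x t. H (label x t) t)"
proof (rule strip_smooth_coinduct[where X="\<lambda>G. \<exists>H. strip_smooth T H \<and> G = (\<lambda>x t. H (label x t) t)"])
  show "\<exists>H'. strip_smooth T H' \<and> (\<lambda>x t. H (label x t) t) = (\<lambda>x t. H' (label x t) t)"
    using assms by blast
next
  fix G assume "\<exists>H. strip_smooth T H \<and> G = (\<lambda>x t. H (label x t) t)"
  then obtain H where H: "strip_smooth T H" and G: "G = (\<lambda>x t. H (label x t) t)" by blast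
  define Hx where "Hx = partial_x T H"
  define Ht where "Ht = partial_t T H"
  have hx: "has_partial_x T H Hx" "strip_smooth T Hx" using strip_smooth_partial_x[OF H] Hx_def by auto
  have ht: "has_partial_t T H Ht" "strip_smooth T Ht" using strip_smooth_partial_t[OF H] Ht_def by auto
  have inv_J: "strip_smooth_expr T (\<lambda>s \<tau>. inverse (J s \<tau>))"
    by (rule expr_compose[OF real_smooth_on_inverse J_smooth]) (use J_pos in auto)
  define Gx where "Gx = (\<lambda>s \<tau>. Hx s \<tau> * inverse (J s \<tau>))"
  define Gt where "Gt = (\<lambda>s \<tau>. Hx s \<tau> * ((-1) * qt s \<tau> * inverse (J s \<tau>)) + Ht s \<tau>)"
  have Gx: "strip_smooth T Gx" unfolding Gx_def
    by (rule strip_smooth_expr_imp_strip_smooth, rule expr_mult[OF expr_smooth[OF hx(2)] inv_J])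
  have Gt: "strip_smooth T Gt" unfolding Gt_def
    by (rule strip_smooth_expr_imp_strip_smooth,
        rule expr_add[OF expr_mult[OF expr_smooth[OF hx(2)] expr_mult[OF expr_mult[OF
          expr_smooth[OF strip_smooth_const] expr_smooth[OF qt_smooth]] inv_J]] expr_smooth[OF ht(2)]])
  have "continuous_on (strip T) (\<lambda>p. (\<lambda>(x, t). H x t) ((\<lambda>(x, t). label x t) p, snd p))"
    by (rule continuous_on_compose2[OF strip_smooth_continuous[OF H]])
       (auto intro!: continuous_intros continuous_on_label[unfolded split_beta] simp: split_beta)
  hence "continuous_on (strip T) (\<lambda>(x, t). G x t)" unfolding G by (simp add: split_beta)
  moreover have "has_partial_x T G (\<lambda>x t. Gx (label x t) t)"
    unfolding has_partial_x_def G Gx_def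
    by (intro allI impI DERIV_chain2[OF _ has_real_derivative_label_x])
       (use hx in \<open>auto simp: has_partial_x_def\<close>)
  moreover have "has_partial_t T G (\<lambda>x t. Gt (label x t) t)"
    unfolding has_partial_t_def G Gt_def
    using has_real_derivative_along_curve[OF hx(1) ht(1) strip_smooth_continuous[OF hx(2)] _
        has_real_derivative_label_t] by simp
  ultimately show "strip_C1_in T (\<lambda>G. (\<exists>H. strip_smooth T H \<and> G = (\<lambda>x t. H (label x t) t)) \<or> strip_smooth T G) G"
    using Gx Gt unfolding strip_C1_in_def by blast
qed

end

section \<open>Smooth functions of one variable\<close>

definition e1 :: "real^3" where "e1 = axis 1 1"

lemma e1_Basis: "e1 \<in> Basis" unfolding e1_def by simp

definition partial_e1 :: "(real^3 \<Rightarrow> real) \<Rightarrow> real^3 \<Rightarrow> real" where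
  "partial_e1 w = (\<lambda>x. frechet_derivative w (at x) e1)"

lemma smooth_partial_e1: assumes "smooth w" shows "smooth (partial_e1 w)"
proof -
  have "C_k k (partial_e1 w)" for k
    using assms C_k.simps(2)[of k w] e1_Basis unfolding smooth_def partial_e1_def by blast
  thus ?thesis unfolding smooth_def by blast
qed

lemma smooth_has_derivative: "smooth w \<Longrightarrow> (w has_derivative frechet_derivative w (at x)) (at x)"
  unfolding smooth_def by (metis C_k.simps(2) differentiable_on_def frechet_derivative_works UNIV_I)

lemma has_real_derivative_along_e1:
  assumes "smooth w"
  shows "((\<lambda>s. w (s *\<^sub>R e1)) has_real_derivative partial_e1 w (s *\<^sub>R e1)) (at s)"
proof -
  let ?w' = "frechet_derivative w (at (s *\<^sub>R e1))"
  have "((\<lambda>s. w (s *\<^sub>R e1)) has_derivative (\<lambda>h. ?w' (h *\<^sub>R e1))) (at s)"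
    by (rule has_derivative_compose[OF _ smooth_has_derivative[OF assms]]) (auto intro!: derivative_eq_intros)
  moreover have "linear ?w'" using smooth_has_derivative[OF assms] by (rule has_derivative_linear)
  hence "(\<lambda>h. ?w' (h *\<^sub>R e1)) = (*) (partial_e1 w (s *\<^sub>R e1))"
    unfolding partial_e1_def by (auto simp: linear_scale)
  ultimately show ?thesis unfolding has_field_derivative_def by simp
qed

lemma real_smooth_on_along_e1: "smooth w \<Longrightarrow> real_smooth_on UNIV (\<lambda>s. w (s *\<^sub>R e1))"
proof (rule real_smooth_on_coinduct[where X="\<lambda>\<phi>. \<exists>w. smooth w \<and> \<phi> = (\<lambda>s. w (s *\<^sub>R e1))"])
  fix \<phi> :: "real \<Rightarrow> real" assume "\<exists>w. smooth w \<and> \<phi> = (\<lambda>s. w (s *\<^sub>R e1))"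
  then obtain w where w: "smooth w" "\<phi> = (\<lambda>s. w (s *\<^sub>R e1))" by blast
  show "\<exists>\<phi>'. (\<forall>x\<in>UNIV. (\<phi> has_real_derivative \<phi>' x) (at x)) \<and>
      ((\<exists>w. smooth w \<and> \<phi>' = (\<lambda>s. w (s *\<^sub>R e1))) \<or> real_smooth_on UNIV \<phi>')"
    using has_real_derivative_along_e1[OF w(1)] smooth_partial_e1[OF w(1)] w(2)
    by (intro exI[of _ "\<lambda>s. partial_e1 w (s *\<^sub>R e1)"]) blast
qed blast

lemma profile_radial: "radial u \<Longrightarrow> profile u s = u (s *\<^sub>R e1)"
  unfolding radial_def profile_def e1_def by (metis norm_scaleR abs_abs)

text \<open>\<open>exp_moment 0 z = (exp z - 1) / z\<close>, continued smoothly through \<open>z = 0\<close>.\<close>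

definition exp_moment :: "nat \<Rightarrow> real \<Rightarrow> real" where
  "exp_moment k x = integral {0..1} (\<lambda>t. t ^ k * exp (t * x))"

lemma has_real_derivative_exp_moment: "(exp_moment k has_real_derivative exp_moment (Suc k) x) (at x)"
proof -
  have "continuous_on (UNIV \<times> cbox 0 1) (\<lambda>p::real \<times> real. snd p ^ k * (exp (snd p * fst p) * snd p))"
    by (intro continuous_intros)
  hence "((\<lambda>x. integral (cbox 0 1) (\<lambda>t. t ^ k * exp (t * x))) has_real_derivative
      integral (cbox 0 1) (\<lambda>t. t ^ k * (exp (t * x) * t))) (at x within UNIV)"
    by (intro leibniz_rule_field_derivative integrable_continuous continuous_intros)
       (auto intro!: derivative_eq_intros simp: split_beta)
  thus ?thesis unfolding exp_moment_def by (simp add: mult_ac)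
qed

lemma real_smooth_on_exp_moment: "real_smooth_on UNIV (exp_moment k)"
proof -
  have "\<exists>k. \<phi> = exp_moment k \<Longrightarrow> real_smooth_on UNIV \<phi>" for \<phi>
    by (rule real_smooth_on_coinduct[where X="\<lambda>\<phi>. \<exists>k. \<phi> = exp_moment k"])
       (auto intro: has_real_derivative_exp_moment)
  thus ?thesis by blast
qed

lemma exp_moment_0: "x * exp_moment 0 x = exp x - 1"
proof -
  have "((\<lambda>t. x * exp (t * x)) has_integral (exp (1 * x) - exp (0 * x))) {0..1}"
    by (rule fundamental_theorem_of_calculus)
       (auto intro!: derivative_eq_intros simp: has_real_derivative_iff_has_vector_derivative[symmetric])
  hence "((\<lambda>t. x * exp (t * x)) has_integral (exp x - 1)) {0..1}" by simp
  moreover have "((\<lambda>t. exp (t * x)) has_integral exp_moment 0 x) {0..1}" unfolding exp_moment_def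
    by (simp, intro integrable_integral integrable_continuous_real continuous_intros)
  hence "((\<lambda>t. x * exp (t * x)) has_integral x * exp_moment 0 x) {0..1}" by (rule has_integral_mult_right)
  ultimately show ?thesis using has_integral_unique by blast
qed

lemma exp_moment_1: "x * exp_moment 1 x + exp_moment 0 x = exp x"
proof -
  have "((\<lambda>t. x * (t * exp (t * x)) + exp (t * x)) has_integral (1 * exp (1 * x) - 0 * exp (0 * x))) {0..1}"
    by (rule fundamental_theorem_of_calculus)
       (auto intro!: derivative_eq_intros
         simp: has_real_derivative_iff_has_vector_derivative[symmetric] algebra_simps)
  hence "integral {0..1} (\<lambda>t. x * (t * exp (t * x)) + exp (t * x)) = exp x" by (simp add: integral_unique)
  moreover have "integral {0..1} (\<lambda>t. x * (t * exp (t * x)) + exp (t * x)) =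
      x * integral {0..1} (\<lambda>t. t * exp (t * x)) + integral {0..1} (\<lambda>t. exp (t * x))"
    by (subst integral_add) (auto intro!: integrable_continuous_real continuous_intros)
  ultimately show ?thesis unfolding exp_moment_def by simp
qed

lemma integral_atLeast_eq_Icc:
  assumes "\<And>y. y > K \<Longrightarrow> g y = 0" shows "integral {s..} g = integral {s..K} (g :: real \<Rightarrow> real)"
proof -
  have "(\<lambda>y. if y \<in> {s..} then g y else 0) = (\<lambda>y. if y \<in> {s..K} then g y else 0)"
    using assms by (auto simp: fun_eq_iff)
  thus ?thesis by (metis integral_restrict_UNIV)
qed

lemma DERIV_zero_outside:
  assumes z: "\<And>y. \<bar>y\<bar> > M \<Longrightarrow> f y = 0" and d: "DERIV f s :> D" and s: "\<bar>s\<bar> > (M::real)"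
  shows "D = 0"
proof -
  have "open {y::real. \<bar>y\<bar> > M}" by (intro open_Collect_less continuous_intros)
  hence "eventually (\<lambda>y. y \<in> {y. \<bar>y\<bar> > M}) (nhds s)" using s by (intro eventually_nhds_in_open) auto
  hence "eventually (\<lambda>y. f y = 0) (nhds s)" by (rule eventually_mono) (use z in auto)
  hence "DERIV (\<lambda>_. 0) s :> D" using d DERIV_cong_ev[of s s f "\<lambda>_. 0" D D] by simp
  thus ?thesis using DERIV_const DERIV_unique by blast
qed

lemma continuous_zero_outside_closed:
  assumes c: "continuous_on UNIV f" and z: "\<And>y. \<bar>y\<bar> > M \<Longrightarrow> f y = (0::real)" and s: "\<bar>s\<bar> \<ge> (M::real)"
  shows "f s = 0"
proof -
  have "closed {y. f y = 0}" by (rule closed_Collect_eq[OF c continuous_on_const])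
  moreover have "s \<in> closure ({M<..} \<union> {..<-M})" using s by (cases "s \<ge> 0") (auto simp: closure_Un)
  moreover have "{M<..} \<union> {..<-M} \<subseteq> {y. f y = 0}" using z by auto
  ultimately show ?thesis using closure_minimal by blast
qed
lemma expr_const: "strip_smooth_expr T (\<lambda>x t. c)"
  by (rule expr_smooth[OF strip_smooth_const])

lemma expr_fst: "strip_smooth_expr T (\<lambda>x t. x)"
  by (rule expr_smooth[OF strip_smooth_fst])

lemma expr_snd: "strip_smooth_expr T (\<lambda>x t. t)"
  by (rule expr_smooth[OF strip_smooth_snd])

lemma expr_of_fst: "real_smooth_on UNIV f \<Longrightarrow> strip_smooth_expr T (\<lambda>x t. f x)"
  using expr_compose[OF _ strip_smooth_fst, of UNIV f] by simp

section \<open>The solution\<close>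

locale compact_radial_data =
  fixes u0 u1 :: "real^3 \<Rightarrow> real" and M :: real
  assumes M_pos: "M > 0" and smooth_u0: "smooth u0" and smooth_u1: "smooth u1"
    and radial_u0: "radial u0" and radial_u1: "radial u1"
    and u0_support: "\<forall>x. norm x > M \<longrightarrow> u0 x = 0" and u1_support: "\<forall>x. norm x > M \<longrightarrow> u1 x = 0"
begin

definition "p0 = (\<lambda>s. u0 (s *\<^sub>R e1))"
definition "p0' = (\<lambda>s. partial_e1 u0 (s *\<^sub>R e1))"
definition "p0'' = (\<lambda>s. partial_e1 (partial_e1 u0) (s *\<^sub>R e1))"
definition "p1 = (\<lambda>s. u1 (s *\<^sub>R e1))"
definition "p1' = (\<lambda>s. partial_e1 u1 (s *\<^sub>R e1))"

lemma real_smooth_on_profiles: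
  "real_smooth_on UNIV p0" "real_smooth_on UNIV p0'" "real_smooth_on UNIV p0''"
  "real_smooth_on UNIV p1" "real_smooth_on UNIV p1'"
  unfolding p0_def p0'_def p0''_def p1_def p1'_def
  using real_smooth_on_along_e1 smooth_u0 smooth_u1 smooth_partial_e1 by blast+

lemma has_real_derivative_profiles:
  "DERIV p0 s :> p0' s" "DERIV p0' s :> p0'' s" "DERIV p1 s :> p1' s"
  "\<exists>D. DERIV p0'' s :> D" "\<exists>D. DERIV p1' s :> D"
  unfolding p0_def p0'_def p0''_def p1_def p1'_def
  using has_real_derivative_along_e1 smooth_u0 smooth_u1 smooth_partial_e1 by blast+

lemma profiles_support:
  assumes "\<bar>y\<bar> > M" shows "p0 y = 0" "p1 y = 0" "p0' y = 0" "p0'' y = 0" "p1' y = 0"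
proof -
  have p0: "p0 y = 0" and p1: "p1 y = 0" if "\<bar>y\<bar> > M" for y
    unfolding p0_def p1_def e1_def using that u0_support u1_support by simp_all
  have p0': "p0' y = 0" if "\<bar>y\<bar> > M" for y
    using DERIV_zero_outside[OF p0 has_real_derivative_profiles(1) that] .
  show "p0 y = 0" "p1 y = 0" "p0' y = 0" using p0[OF assms] p1[OF assms] p0'[OF assms] by auto
  show "p0'' y = 0" using DERIV_zero_outside[OF p0' has_real_derivative_profiles(2) assms] .
  show "p1' y = 0" using DERIV_zero_outside[OF p1 has_real_derivative_profiles(3) assms] .
qed

definition "F0' = (\<lambda>s. (p0 s + s * p0' s - s * p1 s) / 2)"
definition "F0'' = (\<lambda>s. (2 * p0' s + s * p0'' s - p1 s - s * p1' s) / 2)"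

lemma has_real_derivative_F0': "DERIV F0' s :> F0'' s"
  unfolding F0'_def F0''_def
  by (auto intro!: derivative_eq_intros has_real_derivative_profiles simp: field_simps)

lemma continuous_F0': "continuous_on UNIV F0'"
  using has_real_derivative_F0' by (intro continuous_at_imp_continuous_on) (blast intro: DERIV_isCont)

lemma continuous_F0'': "continuous_on UNIV F0''"
proof -
  have "\<exists>D. DERIV F0'' s :> D" for s
    using has_real_derivative_profiles(4,5)[of s] unfolding F0''_def
    by (auto intro!: derivative_eq_intros has_real_derivative_profiles)
  thus ?thesis by (intro continuous_at_imp_continuous_on) (blast intro: DERIV_isCont)
qed

lemma F0'_support: "\<bar>y\<bar> \<ge> M \<Longrightarrow> F0' y = 0"
  by (rule continuous_zero_outside_closed[OF continuous_F0']) (auto simp: F0'_def profiles_support)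

lemma F0''_support: "\<bar>y\<bar> \<ge> M \<Longrightarrow> F0'' y = 0"
  by (rule continuous_zero_outside_closed[OF continuous_F0'']) (auto simp: F0''_def profiles_support)

definition "K = M + 1"

lemma K_gt: "K > M" by (simp add: K_def)

lemma F0_eq: "F0 u0 u1 s = (s * p0 s + integral {s..K} (\<lambda>\<rho>. \<rho> * p1 \<rho>)) / 2"
proof -
  have "profile u0 = p0" "profile u1 = p1"
    using profile_radial radial_u0 radial_u1 unfolding p0_def p1_def by auto
  moreover have "integral {s..} (\<lambda>\<rho>. \<rho> * p1 \<rho>) = integral {s..K} (\<lambda>\<rho>. \<rho> * p1 \<rho>)"
    by (rule integral_atLeast_eq_Icc) (use profiles_support K_gt M_pos in auto)
  ultimately show ?thesis unfolding F0_def by simp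
qed

lemma has_real_derivative_F0: "DERIV (F0 u0 u1) s :> F0' s"
proof -
  have "continuous_on UNIV (\<lambda>\<rho>. \<rho> * p1 \<rho>)"
    using has_real_derivative_profiles(3)
    by (intro continuous_intros continuous_at_imp_continuous_on) (blast intro: DERIV_isCont)
  hence "((\<lambda>x. integral {x..K} (\<lambda>\<rho>. \<rho> * p1 \<rho>)) has_real_derivative - (s * p1 s)) (at s)"
    by (rule has_real_derivative_integral_to_bound) (use profiles_support K_gt M_pos in auto)
  thus ?thesis unfolding F0_eq[abs_def] F0'_def
    by (auto intro!: derivative_eq_intros has_real_derivative_profiles simp: field_simps)
qed

lemma deriv_F0: "deriv (F0 u0 u1) = F0'"
  using has_real_derivative_F0 DERIV_imp_deriv by blast

lemma deriv2_F0: "deriv (deriv (F0 u0 u1)) = F0''"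
  unfolding deriv_F0 using has_real_derivative_F0' DERIV_imp_deriv by blast

text \<open>\<open>J\<close> solves \<open>2 \<partial>\<^sub>\<tau> J = F0' J - F0''\<close>, \<open>J(s, 0) = 1\<close>; \<open>q\<close> is its primitive in \<open>s\<close>
  normalised to the identity right of the support, \<open>qt = \<partial>\<^sub>\<tau> q\<close>, and \<open>G s \<tau>\<close> is the value of the
  solution at \<open>q s \<tau>\<close>, whose \<open>s\<close>-derivative is \<open>V\<^sub>q J = F0' J\<close>.\<close>

definition "J = (\<lambda>s \<tau>. exp (F0' s * \<tau> / 2) - F0'' s * \<tau> / 2 * exp_moment 0 (F0' s * \<tau> / 2))"
definition "Jt = (\<lambda>s \<tau>. (F0' s - F0'' s) * exp (F0' s * \<tau> / 2) / 2)"
definition "q = (\<lambda>s \<tau>. s - integral {s..K} (\<lambda>y. J y \<tau> - 1))"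
definition "qt = (\<lambda>s \<tau>. - integral {s..K} (\<lambda>y. Jt y \<tau>))"
definition "G = (\<lambda>s \<tau>. - integral {s..K} (\<lambda>y. F0' y * J y \<tau>))"

lemma J_0: "J s 0 = 1" by (simp add: J_def)

lemma J_support: "\<bar>s\<bar> \<ge> M \<Longrightarrow> J s \<tau> = 1"
  by (simp add: J_def F0'_support F0''_support)

lemma Jt_support: "\<bar>s\<bar> \<ge> M \<Longrightarrow> Jt s \<tau> = 0"
  by (simp add: Jt_def F0'_support F0''_support)

lemma strip_smooth_F0': "strip_smooth T (\<lambda>s \<tau>. F0' s)"
proof (rule strip_smooth_if_expr)
  show "strip_smooth_expr T (\<lambda>s \<tau>. (1/2) * (p0 s + (s * p0' s + (-1) * (s * p1 s))))"
    by (intro expr_mult expr_add expr_const expr_fst expr_of_fst real_smooth_on_profiles)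
qed (simp add: F0'_def field_simps)

lemma strip_smooth_F0'': "strip_smooth T (\<lambda>s \<tau>. F0'' s)"
proof (rule strip_smooth_if_expr)
  show "strip_smooth_expr T (\<lambda>s \<tau>. (1/2) * (2 * p0' s + (s * p0'' s + ((-1) * p1 s + (-1) * (s * p1' s)))))"
    by (intro expr_mult expr_add expr_const expr_fst expr_of_fst real_smooth_on_profiles)
qed (simp add: F0''_def field_simps)

lemma strip_smooth_F0'_time: "strip_smooth T (\<lambda>s \<tau>. F0' s * \<tau> / 2)"
  by (rule strip_smooth_if_expr[OF expr_mult[OF expr_mult[OF expr_smooth[OF strip_smooth_F0'] expr_snd]
      expr_const[of _ "1/2"]]]) simp

lemma strip_smooth_J: "strip_smooth T J"
proof (rule strip_smooth_if_expr)
  show "strip_smooth_expr T (\<lambda>s \<tau>. exp (F0' s * \<tau> / 2) +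
      (-1) * ((F0'' s * \<tau> * (1/2)) * exp_moment 0 (F0' s * \<tau> / 2)))"
    by (intro expr_add expr_mult expr_const expr_snd expr_smooth[OF strip_smooth_F0'']
        expr_compose[OF real_smooth_on_exp strip_smooth_F0'_time]
        expr_compose[OF real_smooth_on_exp_moment strip_smooth_F0'_time]) auto
qed (simp add: J_def)

lemma strip_smooth_Jt: "strip_smooth T Jt"
proof (rule strip_smooth_if_expr)
  show "strip_smooth_expr T (\<lambda>s \<tau>. (F0' s + (-1) * F0'' s) * exp (F0' s * \<tau> / 2) * (1/2))"
    by (intro expr_add expr_mult expr_const expr_smooth[OF strip_smooth_F0''] expr_smooth[OF strip_smooth_F0']
        expr_compose[OF real_smooth_on_exp strip_smooth_F0'_time]) auto
qed (simp add: Jt_def)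

lemma strip_smooth_q: "strip_smooth T q"
proof (rule strip_smooth_if_expr)
  show "strip_smooth_expr T (\<lambda>s \<tau>. s + (-1) * integral {s..K} (\<lambda>y. J y \<tau> - 1))"
  proof (intro expr_add expr_mult expr_fst expr_const expr_integral)
    show "strip_smooth T (\<lambda>s \<tau>. J s \<tau> - 1)"
      by (rule strip_smooth_if_expr[OF expr_add[OF expr_smooth[OF strip_smooth_J] expr_const[of _ "-1"]]]) simp
    fix x t assume "K \<le> x" thus "J x t - 1 = 0" using J_support K_gt by simp
  qed
qed (simp add: q_def)

lemma strip_smooth_qt: "strip_smooth T qt"
proof (rule strip_smooth_if_expr)
  show "strip_smooth_expr T (\<lambda>s \<tau>. (-1) * integral {s..K} (\<lambda>y. Jt y \<tau>))"
  proof (intro expr_mult expr_const expr_integral strip_smooth_Jt)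
    fix x t assume "K \<le> x" thus "Jt x t = 0" using Jt_support K_gt by simp
  qed
qed (simp add: qt_def)

lemma strip_smooth_G: "strip_smooth T G"
proof (rule strip_smooth_if_expr)
  show "strip_smooth_expr T (\<lambda>s \<tau>. (-1) * integral {s..K} (\<lambda>y. F0' y * J y \<tau>))"
  proof (intro expr_mult expr_const expr_integral)
    show "strip_smooth T (\<lambda>s \<tau>. F0' s * J s \<tau>)"
      by (rule strip_smooth_expr_imp_strip_smooth[OF expr_mult[OF expr_smooth[OF strip_smooth_F0']
          expr_smooth[OF strip_smooth_J]]])
    fix x t assume "K \<le> x" thus "F0' x * J x t = 0" using F0'_support K_gt by simp
  qed
qed (simp add: G_def)

lemma has_real_derivative_J_time: "((\<lambda>\<tau>. J s \<tau>) has_real_derivative Jt s \<tau>) (at \<tau>)"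
proof -
  define z where "z = F0' s * \<tau> / 2"
  have "((\<lambda>\<tau>. J s \<tau>) has_real_derivative exp z * (F0' s / 2) -
      (F0'' s / 2 * exp_moment 0 z + F0'' s * \<tau> / 2 * (exp_moment 1 z * (F0' s / 2)))) (at \<tau>)"
    unfolding J_def z_def
    by (auto intro!: derivative_eq_intros has_real_derivative_exp_moment[THEN DERIV_chain2] simp: field_simps)
  moreover have "F0'' s * \<tau> / 2 * (exp_moment 1 z * (F0' s / 2)) = F0'' s / 2 * (z * exp_moment 1 z)"
    by (simp add: z_def field_simps)
  also have "\<dots> = F0'' s / 2 * (exp z - exp_moment 0 z)"
    using exp_moment_1[of z] by (metis add_diff_cancel_right')
  finally show ?thesis unfolding Jt_def z_def[symmetric] by (simp add: field_simps)
qed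

lemma two_Jt: "2 * Jt s \<tau> = F0' s * J s \<tau> - F0'' s"
proof -
  define z where "z = F0' s * \<tau> / 2"
  have "F0' s * (F0'' s * \<tau> / 2 * exp_moment 0 z) = F0'' s * (z * exp_moment 0 z)"
    by (simp add: z_def field_simps)
  also have "\<dots> = F0'' s * (exp z - 1)" using exp_moment_0[of z] by simp
  finally show ?thesis unfolding J_def Jt_def z_def[symmetric] by (simp add: field_simps)
qed

lemma continuous_J_slice: "t \<in> time_dom T \<Longrightarrow> continuous_on UNIV (\<lambda>y. J y t)"
  using continuous_on_strip_slice[OF strip_smooth_continuous[OF strip_smooth_J]] by blast

lemma q_partial_x: "has_partial_x T q J"
  unfolding has_partial_x_def
proof (intro allI impI)
  fix x t assume t: "t \<in> time_dom T"
  have "((\<lambda>x. integral {x..K} (\<lambda>y. J y t - 1)) has_real_derivative - (J x t - 1)) (at x)"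
    by (rule has_real_derivative_integral_to_bound)
       (use J_support K_gt in \<open>auto intro!: continuous_intros continuous_J_slice[OF t]\<close>)
  hence "((\<lambda>x. x - integral {x..K} (\<lambda>y. J y t - 1)) has_real_derivative 1 - (- (J x t - 1))) (at x)"
    by (intro derivative_intros)
  thus "((\<lambda>x. q x t) has_real_derivative J x t) (at x)" unfolding q_def by simp
qed

lemma q_partial_t: "has_partial_t T q qt"
proof -
  have "has_partial_t T (\<lambda>s \<tau>. J s \<tau> - 1) Jt"
    unfolding has_partial_t_def
    using has_field_derivative_at_within[OF DERIV_diff[OF has_real_derivative_J_time DERIV_const]] by simp
  moreover have "continuous_on (strip T) (\<lambda>(x, t). J x t - 1)"
    using strip_smooth_continuous[OF strip_smooth_J] by (auto intro!: continuous_intros simp: split_beta)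
  ultimately have "has_partial_t T (\<lambda>x t. integral {x..K} (\<lambda>y. J y t - 1)) (\<lambda>x t. integral {x..K} (\<lambda>y. Jt y t))"
    using has_partial_t_integral strip_smooth_continuous[OF strip_smooth_Jt] by blast
  thus ?thesis
    unfolding has_partial_t_def q_def qt_def using DERIV_diff[OF DERIV_const] by fastforce
qed

lemma G_partial_x: "has_partial_x T G (\<lambda>s \<tau>. F0' s * J s \<tau>)"
  unfolding has_partial_x_def
proof (intro allI impI)
  fix x t assume t: "t \<in> time_dom T"
  have "((\<lambda>x. integral {x..K} (\<lambda>y. F0' y * J y t)) has_real_derivative - (F0' x * J x t)) (at x)"
    by (rule has_real_derivative_integral_to_bound)
       (use F0'_support K_gt in \<open>auto intro!: continuous_intros continuous_J_slice[OF t] continuous_F0'\<close>)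
  thus "((\<lambda>x. G x t) has_real_derivative F0' x * J x t) (at x)"
    unfolding G_def using DERIV_minus by fastforce
qed

definition "T0 = tau0 (F0 u0 u1) M"

text \<open>Where \<open>J\<close> first vanishes: for \<open>F0' s \<noteq> 0\<close> the equation \<open>J s \<tau> = 0\<close> reads
  \<open>exp (F0' s \<tau> / 2) = F0'' s / (F0'' s - F0' s)\<close>, i.e. \<open>\<tau> = tau_fun (F0 u0 u1) s\<close>;
  for \<open>F0' s = 0\<close> it reads \<open>\<tau> = 2 / F0'' s\<close>.\<close>

lemma T0_le_zero_of_J: assumes J0: "J s \<tau>1 = 0" and pos: "\<tau>1 > 0" shows "T0 \<le> ereal \<tau>1"
proof -
  let ?F = "F0 u0 u1"
  have "ereal \<tau>1 \<in> (\<lambda>s. ereal (tau_fun ?F s)) ` setA ?F M \<union> (\<lambda>s. ereal (2 / deriv (deriv ?F) s)) ` setB ?F M"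
  proof (cases "F0' s = 0")
    case False
    define z where "z = F0' s * \<tau>1 / 2"
    have "\<not> \<bar>s\<bar> \<ge> M" using F0'_support False by blast
    hence sM: "-M < s" "s < M" by auto
    have "0 = F0' s * (exp z - F0'' s * \<tau>1 / 2 * exp_moment 0 z)" using J0 unfolding J_def z_def by simp
    also have "\<dots> = F0' s * exp z - F0'' s * (z * exp_moment 0 z)" unfolding z_def by (simp add: algebra_simps)
    finally have eq: "(F0'' s - F0' s) * exp z = F0'' s" unfolding exp_moment_0 by (simp add: algebra_simps)
    hence "F0'' s - F0' s \<noteq> 0" using False by auto
    hence R: "F0'' s / (F0'' s - F0' s) = exp z" using eq by (simp add: field_simps)
    hence tf: "tau_fun ?F s = \<tau>1"
      unfolding tau_fun_def deriv2_F0 unfolding deriv_F0 using False by (simp add: z_def)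
    have "s \<in> setA ?F M"
      unfolding setA_def tau_fun_def[symmetric] deriv2_F0 unfolding deriv_F0 using sM False R tf pos by simp
    thus ?thesis using tf by blast
  next
    case True
    hence "F0'' s * \<tau>1 = 2" using J0 by (simp add: J_def exp_moment_def)
    hence "F0'' s = 2 / \<tau>1" using pos by (simp add: field_simps)
    hence bpos: "F0'' s > 0" and "2 / F0'' s = \<tau>1" using pos by simp_all
    moreover have "\<not> \<bar>s\<bar> \<ge> M" using F0''_support bpos by fastforce
    hence "-M < s" "s < M" by auto
    hence "s \<in> setB ?F M" unfolding setB_def deriv2_F0 unfolding deriv_F0 using True bpos by simp
    ultimately show ?thesis unfolding deriv2_F0 by blast
  qed
  thus ?thesis unfolding T0_def tau0_def by (rule Inf_lower)
qed

lemma J_pos: assumes t: "\<tau> \<in> time_dom T0" shows "J s \<tau> > 0"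
proof (rule ccontr)
  assume "\<not> J s \<tau> > 0"
  hence "J s \<tau> \<le> 0" by simp
  moreover have cJ: "continuous_on UNIV (\<lambda>\<tau>. J s \<tau>)"
    using has_real_derivative_J_time by (intro continuous_at_imp_continuous_on) (blast intro: DERIV_isCont)
  ultimately obtain \<tau>1 where \<tau>1: "0 \<le> \<tau>1" "\<tau>1 \<le> \<tau>" "J s \<tau>1 = 0"
    using IVT2'[of "\<lambda>\<tau>. J s \<tau>" \<tau> 0 0] J_0 t continuous_on_subset[OF cJ] by auto
  hence "\<tau>1 > 0" using J_0 by (cases "\<tau>1 = 0") auto
  hence "T0 \<le> ereal \<tau>1" using T0_le_zero_of_J \<tau>1 by blast
  also have "ereal \<tau>1 \<le> ereal \<tau>" using \<tau>1 by simp
  finally show False using t by auto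
qed

lemma q_beyond_support: assumes "s \<ge> M" shows "q s t = s"
proof -
  have "integral {s..K} (\<lambda>y. J y t - 1) = integral {s..K} (\<lambda>y. 0)"
    by (rule integral_cong) (use J_support assms in auto)
  thus ?thesis unfolding q_def by simp
qed

lemma q_surj: assumes t: "t \<in> time_dom T" shows "\<exists>s. q s t = x"
proof -
  have c: "continuous_on UNIV (\<lambda>y. J y t - 1)" by (intro continuous_intros continuous_J_slice[OF t])
  define c0 where "c0 = integral {-M..K} (\<lambda>y. J y t - 1)"
  have left: "q s t = s - c0" if s: "s \<le> -M" for s
  proof -
    have "integral {s..-M} (\<lambda>y. J y t - 1) + integral {-M..K} (\<lambda>y. J y t - 1) = integral {s..K} (\<lambda>y. J y t - 1)"
      by (rule Henstock_Kurzweil_Integration.integral_combine)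
         (use s M_pos K_gt in \<open>auto intro!: integrable_continuous_real continuous_on_subset[OF c]\<close>)
    moreover have "integral {s..-M} (\<lambda>y. J y t - 1) = integral {s..-M} (\<lambda>y. 0)"
      by (rule integral_cong) (use J_support in auto)
    ultimately show ?thesis unfolding q_def c0_def by simp
  qed
  define L where "L = min x (-M) - \<bar>c0\<bar>"
  define U where "U = max x M"
  have qL: "q L t \<le> x" using left[of L] M_pos by (simp add: L_def)
  have qU: "x \<le> q U t" using q_beyond_support[of U t] by (simp add: U_def)
  have LU: "L \<le> U" using M_pos by (simp add: L_def U_def)
  have "continuous_on {L..U} (\<lambda>s. q s t)"
    using continuous_on_subset[OF continuous_on_strip_slice[OF strip_smooth_continuous[OF strip_smooth_q] t]]
    by blast
  thus ?thesis using IVT'[of "\<lambda>s. q s t" L x U, OF qL qU LU] by blast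
qed

sublocale lagr: lagrangian_map T0 q J qt
  by unfold_locales (use strip_smooth_q q_partial_x q_partial_t strip_smooth_J strip_smooth_qt J_pos q_surj in auto)

lemma label_0: "lagr.label x 0 = x"
proof -
  have "q s 0 = s" for s unfolding q_def J_0 by simp
  thus ?thesis unfolding lagr.label_def by simp
qed

lemma G_0: "G x 0 = F0 u0 u1 x"
proof (cases "x \<le> K")
  case True
  have "(F0' has_integral (F0 u0 u1 K - F0 u0 u1 x)) {x..K}"
    by (rule fundamental_theorem_of_calculus)
       (use True has_real_derivative_F0 in \<open>auto simp: has_real_derivative_iff_has_vector_derivative[symmetric]
          intro: has_field_derivative_at_within\<close>)
  moreover have "F0 u0 u1 K = 0" unfolding F0_eq using profiles_support(1)[of K] K_gt M_pos by simp
  ultimately show ?thesis unfolding G_def J_0 by (simp add: integral_unique)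
next
  case False
  hence "\<bar>x\<bar> > M" using K_gt by auto
  thus ?thesis unfolding G_def F0_eq using False profiles_support(1) by simp
qed

text \<open>The characteristic speed: particles move with velocity \<open>(V - V\<^sub>q) / 2\<close>.\<close>

lemma two_qt: assumes t: "t \<in> time_dom T0" shows "2 * qt s t = G s t - F0' s"
proof -
  have cJ: "continuous_on UNIV (\<lambda>y. J y t)" using continuous_J_slice[OF t] .
  have "integral {s..K} F0'' = - F0' s"
  proof (cases "s \<le> K")
    case True
    have "(F0'' has_integral (F0' K - F0' s)) {s..K}"
      by (rule fundamental_theorem_of_calculus)
         (use True has_real_derivative_F0' in \<open>auto simp: has_real_derivative_iff_has_vector_derivative[symmetric]
            intro: has_field_derivative_at_within\<close>)
    thus ?thesis using F0'_support K_gt by (simp add: integral_unique)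
  next
    case False thus ?thesis using F0'_support K_gt by simp
  qed
  moreover have "(\<lambda>y. F0' y * J y t) integrable_on {s..K}" "F0'' integrable_on {s..K}"
    by (intro integrable_continuous_real continuous_intros continuous_on_subset[OF cJ]
        continuous_on_subset[OF continuous_F0'] continuous_on_subset[OF continuous_F0''], auto)+
  hence "integral {s..K} (\<lambda>y. F0' y * J y t - F0'' y) = integral {s..K} (\<lambda>y. F0' y * J y t) - integral {s..K} F0''"
    by (rule integral_diff)
  moreover have "2 * qt s t = - integral {s..K} (\<lambda>y. F0' y * J y t - F0'' y)"
    unfolding qt_def two_Jt[symmetric] by simp
  ultimately show ?thesis unfolding G_def by simp
qed

definition "V = (\<lambda>x t. G (lagr.label x t) t)"

definition "Vd = (\<lambda>i j. (partial_x T0 ^^ i) ((partial_t T0 ^^ j) V))"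

lemma smooth_derivs_Vd: "smooth_derivs T0 Vd"
  unfolding Vd_def
  by (rule smooth_derivs_partial_iterates[OF lagr.strip_smooth_compose_label[OF strip_smooth_G, folded V_def]])

lemma Vd_has_real_derivative_x:
  "t \<in> time_dom T0 \<Longrightarrow> ((\<lambda>x. Vd i j x t) has_real_derivative Vd (Suc i) j y t) (at y)"
  using smooth_derivs_Vd unfolding smooth_derivs_def by simp

lemma Vd_has_real_derivative_t:
  "t \<in> time_dom T0 \<Longrightarrow> ((\<lambda>t. Vd i j x t) has_real_derivative Vd i (Suc j) x t) (at t within time_dom T0)"
  using smooth_derivs_Vd unfolding smooth_derivs_def by simp

lemma Vd_00: "Vd 0 0 x t = G (lagr.label x t) t"
  by (simp add: Vd_def V_def)

lemma Vd_10: assumes t: "t \<in> time_dom T0" shows "Vd 1 0 x t = F0' (lagr.label x t)"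
proof -
  have "((\<lambda>x. G (lagr.label x t) t) has_real_derivative
      F0' (lagr.label x t) * J (lagr.label x t) t * inverse (J (lagr.label x t) t)) (at x)"
    by (rule DERIV_chain2[OF _ lagr.has_real_derivative_label_x[OF t]])
       (use G_partial_x t in \<open>auto simp: has_partial_x_def\<close>)
  hence "((\<lambda>x. Vd 0 0 x t) has_real_derivative F0' (lagr.label x t)) (at x)"
    using J_pos[OF t, of "lagr.label x t"] by (simp add: Vd_00 mult.assoc)
  from DERIV_unique[OF this Vd_has_real_derivative_x[OF t, of 0 0 x]] show ?thesis by simp
qed

lemma Vd_20: assumes t: "t \<in> time_dom T0"
  shows "Vd 2 0 x t = F0'' (lagr.label x t) * inverse (J (lagr.label x t) t)"
proof -
  have "((\<lambda>x. Vd 1 0 x t) has_real_derivative F0'' (lagr.label x t) * inverse (J (lagr.label x t) t)) (at x)"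
    unfolding Vd_10[OF t] by (rule DERIV_chain2[OF has_real_derivative_F0' lagr.has_real_derivative_label_x[OF t]])
  thus ?thesis using Vd_has_real_derivative_x[OF t, of 1 0 x] DERIV_unique by (simp add: numeral_2_eq_2)
qed

lemma Vd_11: assumes t: "t \<in> time_dom T0"
  shows "Vd 1 1 x t = F0'' (lagr.label x t) * (- qt (lagr.label x t) t * inverse (J (lagr.label x t) t))"
proof -
  have "((\<lambda>t. F0' (lagr.label x t)) has_real_derivative
      F0'' (lagr.label x t) * (- qt (lagr.label x t) t * inverse (J (lagr.label x t) t))) (at t within time_dom T0)"
    by (rule DERIV_chain2[OF has_real_derivative_F0' lagr.has_real_derivative_label_t[OF t]])
  hence "((\<lambda>t. Vd 1 0 x t) has_real_derivative
      F0'' (lagr.label x t) * (- qt (lagr.label x t) t * inverse (J (lagr.label x t) t))) (at t within time_dom T0)"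
    by (rule has_field_derivative_transform_within[where d=1]) (use t Vd_10 in auto)
  from has_field_derivative_unique[OF this Vd_has_real_derivative_t[OF t, of 1 0 x]
      at_within_time_dom_nontrivial[OF t]]
  show ?thesis by simp
qed

lemma Vd_equation:
  assumes t: "t \<in> time_dom T0"
  shows "2 * Vd 1 1 x t + Vd 0 0 x t * Vd 2 0 x t - Vd 1 0 x t * Vd 2 0 x t = 0"
proof -
  define s where "s = lagr.label x t"
  have "2 * Vd 1 1 x t + Vd 0 0 x t * Vd 2 0 x t - Vd 1 0 x t * Vd 2 0 x t
      = F0'' s * inverse (J s t) * (G s t - F0' s - 2 * qt s t)"
    unfolding Vd_00 Vd_10[OF t] Vd_20[OF t] Vd_11[OF t] s_def[symmetric] by (simp add: algebra_simps)
  thus ?thesis using two_qt[OF t] by simp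
qed

lemma Vd_support:
  assumes t: "t \<in> time_dom T0" and x: "x > M"
  shows "Vd 0 0 x t = 0"
proof -
  have "lagr.label x t = x" by (rule lagr.label_eqI[OF t q_beyond_support]) (use x in auto)
  moreover have "integral {x..K} (\<lambda>y. F0' y * J y t) = integral {x..K} (\<lambda>y. 0)"
    by (rule integral_cong) (use F0'_support x in auto)
  ultimately show ?thesis unfolding Vd_00 G_def by simp
qed

lemma exists_smooth_solution:
  "\<exists>D. smooth_derivs T0 D \<and>
     (\<forall>x. D 0 0 x 0 = F0 u0 u1 x) \<and>
     (\<forall>(x, t) \<in> strip T0. 2 * D 1 1 x t + D 0 0 x t * D 2 0 x t - D 1 0 x t * D 2 0 x t = 0) \<and>
     (\<forall>(x, t) \<in> strip T0. x > M \<longrightarrow> D 0 0 x t = 0)"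
  using smooth_derivs_Vd Vd_equation Vd_support by (intro exI[of _ Vd]) (auto simp: Vd_00 label_0 G_0)

end

theorem lemma2p1:
  fixes u0 u1 :: "real^3 \<Rightarrow> real" and M :: real
  assumes "M > 0"
    and "smooth u0" and "smooth u1"
    and "radial u0" and "radial u1"
    and "\<forall>x. norm x > M \<longrightarrow> u0 x = 0"
    and "\<forall>x. norm x > M \<longrightarrow> u1 x = 0"
  shows "\<exists>D. smooth_derivs (tau0 (F0 u0 u1) M) D \<and>
     (\<forall>q. D 0 0 q 0 = F0 u0 u1 q) \<and>
     (\<forall>(q,t) \<in> strip (tau0 (F0 u0 u1) M).
         2 * D 1 1 q t + D 0 0 q t * D 2 0 q t - D 1 0 q t * D 2 0 q t = 0) \<and>
     (\<forall>(q,t) \<in> strip (tau0 (F0 u0 u1) M). q > M \<longrightarrow> D 0 0 q t = 0)"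
proof -
  interpret compact_radial_data u0 u1 M using assms by unfold_locales
  show ?thesis using exists_smooth_solution unfolding T0_def .
qed

end
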